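(* In the setting below, let $\nu,\nu'\subseteq\{0,\dots,n\}$ with $|\nu|=|\nu'|=n$ and $\nu\neq\nu'$, and put $$\lambda^{\mathbb{E}}_{\nu\cap\nu'}=\max_{\tau\in D(n-2),\ \mathrm{type}(\tau)=\nu\cap\nu'}\lambda^{\mathbb{E}}_{\tau,\mathrm{bipartite}}.$$ Then $$\max\{\|P^\pi_\nu P^\pi_{\nu'}-P^\pi_{\nu\cap\nu'}\|,\ \|P^\pi_{\nu'}P^\pi_{\nu}-P^\pi_{\nu\cap\nu'}\|\}\le\Big(\sup_{g\in K}\|\pi(g)\|^2\Big)\lambda^{\mathbb{E}}_{\nu\cap\nu'}.$$
   Context: Setting: $X$ is a pure $n$-dimensional partite simplicial complex ($n\ge2$; vertex set partitioned into $V_0,\dots,V_n$, each $n$-simplex having one vertex in each $V_i$; $\mathrm{type}(\tau)=\{i:\tau\cap V_i\neq\emptyset\}$), gallery connected, with all $1$-dimensional links connected finite graphs. $G$ is a locally compact unimodular group with Haar measure $\mu$ acting cocompactly on $X$ by type-preserving simplicial automorphisms, with $G_\tau$ open compact for every $\tau\in X(n-2)\cup X(n-1)\cup X(n)$; $\pi$ is a strongly continuous representation of $G$ on a Banach space $\mathbb{E}$ with norm $|\cdot|$. For $k=n-2,n-1,n$, $D(k)$ is a set of representatives of the $G$-orbits on $X(k)$, chosen so that for $k_1<k_2$ every $\tau\in D(k_1)$ is contained in some $\sigma\in D(k_2)$. $K=\{g\in G:\exists\sigma,\sigma'\in D(n),\ |g.\sigma\cap\sigma'|\ge n-1\}$.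 $C(X(n),\pi)$ is the space of maps $\phi:X(n)\to\mathbb{E}$ with $\phi(g.\sigma)=\pi(g)\phi(\sigma)$, normed by $\|\phi\|^2=\sum_{\sigma\in D(n)}\frac{1}{\mu(G_\sigma)}|\phi(\sigma)|^2$. For $\nu\subseteq\{0,\dots,n\}$ with $|\nu|\in\{n-1,n\}$, write $\sigma\sim_\nu\sigma'$ if there is a simplex $\tau\subseteq\sigma\cap\sigma'$ with $\mathrm{type}(\tau)=\nu$, and $P^\pi_\nu\phi(\sigma)=\frac{1}{|\{\sigma':\sigma'\sim_\nu\sigma\}|}\sum_{\sigma'\sim_\nu\sigma}\phi(\sigma')$. For $\tau\in X(n-2)$, the link $X_\tau$ is the graph with vertices the $v\notin\tau$ with $\tau\cup\{v\}\in X$ and edges the pairs $\{u,v\}$ with $\tau\cup\{u,v\}\in X(n)$, each edge of weight $1$ (so vertex weight $m(v)$ is the degree); it is bipartite with sides the vertices of each of the two colours not in $\mathrm{type}(\tau)$. For a finite bipartite graph with sides $S_1,S_2$ and such weights, $\ell^2(V,m;\mathbb{E})$ is the space of $\phi:V\to\mathbb{E}$ with $\|\phi\|^2=\sum_vm(v)|\phi(v)|^2$, $(A\phi)(v)=\frac1{m(v)}\sum_{u:\{u,v\}\in E}\phi(u)$, $M_{\mathrm{sides}}\phi(u)=\frac1{m(S_i)}\sum_{w\in S_i}m(w)\phi(w)$ for $u\in S_i$; $\lambda^{\mathbb{E}}_{\tau,\mathrm{bipartite}}$ is the operator norm of $A(I-M_{\mathrm{sides}})$ acting on $\ell^2(X_\tau(0),m;\mathbb{E})$.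 *)

theory Defs
  imports "HOL-Analysis.Analysis" "HOL-Algebra.Group"
begin

definition simplicial_complex :: "'v set set \<Rightarrow> bool" where
  "simplicial_complex X \<longleftrightarrow>
     (\<forall>\<sigma>\<in>X. finite \<sigma> \<and> \<sigma> \<noteq> {}) \<and>
     (\<forall>\<sigma>\<in>X. \<forall>\<tau>. \<tau> \<subseteq> \<sigma> \<and> \<tau> \<noteq> {} \<longrightarrow> \<tau> \<in> X)"

definition faces :: "'v set set \<Rightarrow> nat \<Rightarrow> 'v set set" where
  "faces X k = {\<sigma>\<in>X. card \<sigma> = k + 1}"

definition vertices :: "'v set set \<Rightarrow> 'v set" where
  "vertices X = {v. {v} \<in> X}"

definition stype :: "('v \<Rightarrow> nat) \<Rightarrow> 'v set \<Rightarrow> nat set" where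
  "stype col \<tau> = col ` \<tau>"

definition pure_partite_complex :: "nat \<Rightarrow> 'v set set \<Rightarrow> ('v \<Rightarrow> nat) \<Rightarrow> bool" where
  "pure_partite_complex n X col \<longleftrightarrow>
     simplicial_complex X \<and> faces X n \<noteq> {} \<and>
     (\<forall>\<sigma>\<in>X. \<exists>\<sigma>'\<in>faces X n. \<sigma> \<subseteq> \<sigma>') \<and>
     (\<forall>v\<in>vertices X. col v \<le> n) \<and>
     (\<forall>\<sigma>\<in>faces X n. bij_betw col \<sigma> {0..n})"

definition gallery_connected :: "nat \<Rightarrow> 'v set set \<Rightarrow> bool" where
  "gallery_connected n X \<longleftrightarrow>
     (\<forall>\<sigma>\<in>faces X n. \<forall>\<sigma>'\<in>faces X n.
        (\<sigma>, \<sigma>') \<in> {(a, b). a \<in> faces X n \<and> b \<in> faces X n \<and> card (a \<inter> b) = n}\<^sup>*)"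

definition link_vertices :: "'v set set \<Rightarrow> 'v set \<Rightarrow> 'v set" where
  "link_vertices X \<tau> = {v. v \<notin> \<tau> \<and> insert v \<tau> \<in> X}"

definition link_adj :: "nat \<Rightarrow> 'v set set \<Rightarrow> 'v set \<Rightarrow> 'v \<Rightarrow> 'v \<Rightarrow> bool" where
  "link_adj n X \<tau> u v \<longleftrightarrow> \<tau> \<union> {u, v} \<in> faces X n"

text \<open>vertex weight = degree (each edge has weight 1)\<close>
definition link_weight :: "nat \<Rightarrow> 'v set set \<Rightarrow> 'v set \<Rightarrow> 'v \<Rightarrow> real" where
  "link_weight n X \<tau> v = real (card {u. link_adj n X \<tau> u v})"

definition links_finite_connected :: "nat \<Rightarrow> 'v set set \<Rightarrow> bool" where
  "links_finite_connected n X \<longleftrightarrow>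
     (\<forall>\<tau>\<in>faces X (n - 2). finite (link_vertices X \<tau>) \<and>
        (\<forall>u\<in>link_vertices X \<tau>. \<forall>v\<in>link_vertices X \<tau>.
           (u, v) \<in> {(a, b). link_adj n X \<tau> a b}\<^sup>*))"

definition wl2_norm :: "'v set \<Rightarrow> ('v \<Rightarrow> real) \<Rightarrow> ('v \<Rightarrow> 'e::real_normed_vector) \<Rightarrow> real" where
  "wl2_norm V m \<phi> = sqrt (\<Sum>v\<in>V. m v * (norm (\<phi> v))\<^sup>2)"

definition graph_A :: "'v set \<Rightarrow> ('v \<Rightarrow> 'v \<Rightarrow> bool) \<Rightarrow> ('v \<Rightarrow> real)
      \<Rightarrow> ('v \<Rightarrow> 'e::real_normed_vector) \<Rightarrow> 'v \<Rightarrow> 'e" where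
  "graph_A V adj m \<phi> v = (1 / m v) *\<^sub>R (\<Sum>u\<in>{u\<in>V. adj u v}. \<phi> u)"

text \<open>projection onto functions constant on each side; the sides are the fibres of side\<close>
definition M_sides :: "'v set \<Rightarrow> ('v \<Rightarrow> 'c) \<Rightarrow> ('v \<Rightarrow> real)
      \<Rightarrow> ('v \<Rightarrow> 'e::real_normed_vector) \<Rightarrow> 'v \<Rightarrow> 'e" where
  "M_sides V side m \<phi> u =
     (let S = {w\<in>V. side w = side u} in (1 / (\<Sum>w\<in>S. m w)) *\<^sub>R (\<Sum>w\<in>S. m w *\<^sub>R \<phi> w))"

definition bipartite_lambda :: "'e::real_normed_vector itself \<Rightarrow> 'v set \<Rightarrow> ('v \<Rightarrow> 'v \<Rightarrow> bool)
      \<Rightarrow> ('v \<Rightarrow> 'c) \<Rightarrow> ('v \<Rightarrow> real) \<Rightarrow> real" where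
  "bipartite_lambda TYPE('e) V adj side m =
     Sup ((\<lambda>\<phi>::'v \<Rightarrow> 'e. wl2_norm V m (graph_A V adj m (\<lambda>v. \<phi> v - M_sides V side m \<phi> v)))
            ` {\<phi>. wl2_norm V m \<phi> \<le> 1})"

text \<open>lambda^E_{tau,bipartite}: sides are the colour classes of the link\<close>
definition link_lambda :: "'e::real_normed_vector itself \<Rightarrow> nat \<Rightarrow> 'v set set \<Rightarrow> ('v \<Rightarrow> nat)
      \<Rightarrow> 'v set \<Rightarrow> real" where
  "link_lambda E n X col \<tau> =
     bipartite_lambda E (link_vertices X \<tau>) (link_adj n X \<tau>) col (link_weight n X \<tau>)"

definition topological_group :: "('g, 'b) monoid_scheme \<Rightarrow> 'g topology \<Rightarrow> bool" where
  "topological_group G T \<longleftrightarrow> group G \<and> topspace T = carrier G \<and>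
     continuous_map (prod_topology T T) T (\<lambda>(x, y). x \<otimes>\<^bsub>G\<^esub> y) \<and>
     continuous_map T T (\<lambda>x. inv\<^bsub>G\<^esub> x)"

definition lc_group :: "('g, 'b) monoid_scheme \<Rightarrow> 'g topology \<Rightarrow> bool" where
  "lc_group G T \<longleftrightarrow> topological_group G T \<and> Hausdorff_space T \<and> locally_compact_space T"

definition haar_measure :: "('g, 'b) monoid_scheme \<Rightarrow> 'g topology \<Rightarrow> 'g measure \<Rightarrow> bool" where
  "haar_measure G T \<mu> \<longleftrightarrow>
     space \<mu> = topspace T \<and> sets \<mu> = sigma_sets (topspace T) (Collect (openin T)) \<and>
     (\<forall>g\<in>carrier G. \<forall>A\<in>sets \<mu>. emeasure \<mu> ((\<lambda>x. g \<otimes>\<^bsub>G\<^esub> x) ` A) = emeasure \<mu> A) \<and>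
     (\<forall>C. compactin T C \<longrightarrow> emeasure \<mu> C < \<infinity>) \<and>
     (\<forall>U. openin T U \<and> U \<noteq> {} \<longrightarrow> emeasure \<mu> U > 0) \<and>
     (\<forall>A\<in>sets \<mu>. emeasure \<mu> A = (INF U\<in>{U. openin T U \<and> A \<subseteq> U}. emeasure \<mu> U)) \<and>
     (\<forall>U. openin T U \<longrightarrow> emeasure \<mu> U = (SUP C\<in>{C. compactin T C \<and> C \<subseteq> U}. emeasure \<mu> C))"

definition unimodular_haar :: "('g, 'b) monoid_scheme \<Rightarrow> 'g topology \<Rightarrow> 'g measure \<Rightarrow> bool" where
  "unimodular_haar G T \<mu> \<longleftrightarrow> lc_group G T \<and> haar_measure G T \<mu> \<and>
     (\<forall>g\<in>carrier G. \<forall>A\<in>sets \<mu>. emeasure \<mu> ((\<lambda>x. x \<otimes>\<^bsub>G\<^esub> g) ` A) = emeasure \<mu> A)"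

definition strongly_continuous_rep ::
    "('g, 'b) monoid_scheme \<Rightarrow> 'g topology \<Rightarrow> ('g \<Rightarrow> ('e::banach \<Rightarrow>\<^sub>L 'e)) \<Rightarrow> bool" where
  "strongly_continuous_rep G T \<pi> \<longleftrightarrow>
     \<pi> \<one>\<^bsub>G\<^esub> = id_blinfun \<and>
     (\<forall>g\<in>carrier G. \<forall>h\<in>carrier G. \<pi> (g \<otimes>\<^bsub>G\<^esub> h) = \<pi> g o\<^sub>L \<pi> h) \<and>
     (\<forall>v. continuous_map T euclidean (\<lambda>g. blinfun_apply (\<pi> g) v))"

definition type_preserving_action ::
    "('g, 'b) monoid_scheme \<Rightarrow> 'v set set \<Rightarrow> ('v \<Rightarrow> nat) \<Rightarrow> ('g \<Rightarrow> 'v \<Rightarrow> 'v) \<Rightarrow> bool" where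
  "type_preserving_action G X col act \<longleftrightarrow>
     (\<forall>v\<in>vertices X. act \<one>\<^bsub>G\<^esub> v = v) \<and>
     (\<forall>g\<in>carrier G. \<forall>h\<in>carrier G. \<forall>v\<in>vertices X. act (g \<otimes>\<^bsub>G\<^esub> h) v = act g (act h v)) \<and>
     (\<forall>g\<in>carrier G. \<forall>\<sigma>\<in>X. act g ` \<sigma> \<in> X) \<and>
     (\<forall>g\<in>carrier G. \<forall>v\<in>vertices X. col (act g v) = col v)"

definition orbit :: "('g, 'b) monoid_scheme \<Rightarrow> ('g \<Rightarrow> 'v \<Rightarrow> 'v) \<Rightarrow> 'v set \<Rightarrow> 'v set set" where
  "orbit G act \<sigma> = {act g ` \<sigma> | g. g \<in> carrier G}"

definition cocompact :: "('g, 'b) monoid_scheme \<Rightarrow> 'v set set \<Rightarrow> ('g \<Rightarrow> 'v \<Rightarrow> 'v) \<Rightarrow> bool" where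
  "cocompact G X act \<longleftrightarrow> finite (orbit G act ` X)"

definition stab :: "('g, 'b) monoid_scheme \<Rightarrow> ('g \<Rightarrow> 'v \<Rightarrow> 'v) \<Rightarrow> 'v set \<Rightarrow> 'g set" where
  "stab G act \<sigma> = {g\<in>carrier G. act g ` \<sigma> = \<sigma>}"

definition orbit_reps :: "('g, 'b) monoid_scheme \<Rightarrow> ('g \<Rightarrow> 'v \<Rightarrow> 'v) \<Rightarrow> 'v set set \<Rightarrow> 'v set set \<Rightarrow> bool" where
  "orbit_reps G act Y D \<longleftrightarrow> D \<subseteq> Y \<and>
     (\<forall>\<sigma>\<in>Y. \<exists>\<tau>\<in>D. \<sigma> \<in> orbit G act \<tau>) \<and>
     (\<forall>\<tau>\<in>D. \<forall>\<tau>'\<in>D. \<tau>' \<in> orbit G act \<tau> \<longrightarrow> \<tau>' = \<tau>)"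

definition K_set :: "('g, 'b) monoid_scheme \<Rightarrow> ('g \<Rightarrow> 'v \<Rightarrow> 'v) \<Rightarrow> nat \<Rightarrow> 'v set set \<Rightarrow> 'g set" where
  "K_set G act n Dn = {g\<in>carrier G. \<exists>\<sigma>\<in>Dn. \<exists>\<sigma>'\<in>Dn. card (act g ` \<sigma> \<inter> \<sigma>') \<ge> n - 1}"

definition C_space :: "('g, 'b) monoid_scheme \<Rightarrow> ('g \<Rightarrow> 'v \<Rightarrow> 'v) \<Rightarrow> nat \<Rightarrow> 'v set set
      \<Rightarrow> ('g \<Rightarrow> ('e::banach \<Rightarrow>\<^sub>L 'e)) \<Rightarrow> ('v set \<Rightarrow> 'e) set" where
  "C_space G act n X \<pi> = {\<phi>. (\<forall>g\<in>carrier G. \<forall>\<sigma>\<in>faces X n. \<phi> (act g ` \<sigma>) = \<pi> g (\<phi> \<sigma>)) \<and>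
                              (\<forall>\<sigma>. \<sigma> \<notin> faces X n \<longrightarrow> \<phi> \<sigma> = 0)}"

definition C_norm :: "('g, 'b) monoid_scheme \<Rightarrow> ('g \<Rightarrow> 'v \<Rightarrow> 'v) \<Rightarrow> 'g measure \<Rightarrow> 'v set set
      \<Rightarrow> ('v set \<Rightarrow> 'e::banach) \<Rightarrow> real" where
  "C_norm G act \<mu> Dn \<phi> = sqrt (\<Sum>\<sigma>\<in>Dn. (norm (\<phi> \<sigma>))\<^sup>2 / measure \<mu> (stab G act \<sigma>))"

definition sim_nu :: "'v set set \<Rightarrow> ('v \<Rightarrow> nat) \<Rightarrow> nat set \<Rightarrow> 'v set \<Rightarrow> 'v set \<Rightarrow> bool" where
  "sim_nu X col \<nu> \<sigma> \<sigma>' \<longleftrightarrow> (\<exists>\<tau>. \<tau> \<in> X \<and> \<tau> \<subseteq> \<sigma> \<inter> \<sigma>' \<and> stype col \<tau> = \<nu>)"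

definition P_op :: "nat \<Rightarrow> 'v set set \<Rightarrow> ('v \<Rightarrow> nat) \<Rightarrow> nat set
      \<Rightarrow> ('v set \<Rightarrow> 'e::real_normed_vector) \<Rightarrow> 'v set \<Rightarrow> 'e" where
  "P_op n X col \<nu> \<phi> \<sigma> =
     (if \<sigma> \<in> faces X n then
        (let S = {\<sigma>'\<in>faces X n. sim_nu X col \<nu> \<sigma>' \<sigma>} in (1 / real (card S)) *\<^sub>R (\<Sum>\<sigma>'\<in>S. \<phi> \<sigma>'))
      else 0)"

definition op_norm_on :: "'a set \<Rightarrow> ('a \<Rightarrow> real) \<Rightarrow> ('a \<Rightarrow> 'a) \<Rightarrow> real" where
  "op_norm_on C N T = Sup ((\<lambda>\<phi>. N (T \<phi>)) ` {\<phi>\<in>C. N \<phi> \<le> 1})"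

end

theory Submission
  imports Defs
begin

(*
  Write nu = {0..n} - {alpha} and nu' = {0..n} - {beta}. The operator
  P_nu P_nu' - P_(nu Int nu') only mixes chambers sharing a face of type nu Int nu',
  so it splits over the stars of the (n-2)-faces tau of that type. The chambers of
  such a star are the edges of the bipartite link of tau: P_nu' averages over the
  edges at the alpha-endpoint, P_nu then averages the result over the edges at the
  beta-endpoint, and P_(nu Int nu') is the mean over the whole star. On the star the
  operator is therefore A (I - M_sides) applied to the alpha-averages of phi, which
  gives the local bound with lambda_tau.

  To add up the local bounds in the norm of C(X(n), pi), each star is split into
  G-orbits of chambers. Orbit-stabiliser for the unimodular Haar measure gives
  mu(G_tau) = |orbit| * mu(G_sigma), and by equivariance the values of phi along an
  orbit in the star are related by operators pi g with g, g^-1 in K. This costs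
  sup_K |pi g|^2 on each side of the local bound, i.e. the factor sup_K |pi g|^2
  after taking square roots. The supremum is finite by uniform boundedness, since
  K is covered by finitely many cosets of compact stabilisers.
*)

section \<open>Uniform boundedness\<close>

lemma banach_steinhaus_ball:
  fixes A :: "'i \<Rightarrow> ('a::banach \<Rightarrow>\<^sub>L 'b::real_normed_vector)"
  assumes pointwise: "\<And>x. bdd_above ((\<lambda>k. norm (A k x)) ` K)"
  obtains r x0 m where "r > 0" "\<And>k y. k \<in> K \<Longrightarrow> y \<in> ball x0 r \<Longrightarrow> norm (A k y) \<le> real m"
proof -
  define F where "F m = {x. \<forall>k\<in>K. norm (A k x) \<le> real m}" for m :: nat
  have closed: "closedin euclidean (F m)" for m
  proof -
    have "closed {x. norm (A k x) \<le> real m}" for k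
      by (rule closed_Collect_le) (intro continuous_intros)+
    moreover have "F m = (\<Inter>k\<in>K. {x. norm (A k x) \<le> real m})" unfolding F_def by blast
    ultimately show ?thesis by (simp add: closed_INT)
  qed
  have cover: "\<Union>(range F) = UNIV"
  proof -
    have "x \<in> F (nat \<lceil>B\<rceil>)" if "\<forall>k\<in>K. norm (A k x) \<le> B" for x B
    proof -
      have "B \<le> real (nat \<lceil>B\<rceil>)" by linarith
      then show ?thesis using that unfolding F_def by force
    qed
    moreover have "\<exists>B. \<forall>k\<in>K. norm (A k x) \<le> B" for x
      using pointwise[of x] by (auto simp: bdd_above_def)
    ultimately show ?thesis by (metis UNIV_eq_I rangeI UnionI)
  qed
  have "\<exists>m. interior (F m) \<noteq> {}"
  proof (rule ccontr)
    assume "\<nexists>m. interior (F m) \<noteq> {}"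
    then have "euclidean interior_of \<Union>(range F) = {}"
      by (intro Baire_category_alt) (use closed completely_metrizable_space_euclidean in auto)
    then show False using cover by simp
  qed
  then obtain m x0 where "x0 \<in> interior (F m)" by blast
  then obtain r where r: "r > 0" "ball x0 r \<subseteq> F m" using mem_interior by blast
  show ?thesis
  proof (rule that[OF r(1)])
    fix k y assume "k \<in> K" "y \<in> ball x0 r"
    then show "norm (A k y) \<le> real m" using r(2) unfolding F_def by blast
  qed
qed

lemma banach_steinhaus:
  fixes A :: "'i \<Rightarrow> ('a::banach \<Rightarrow>\<^sub>L 'b::real_normed_vector)"
  assumes pointwise: "\<And>x. bdd_above ((\<lambda>k. norm (A k x)) ` K)"
  shows "bdd_above ((\<lambda>k. norm (A k)) ` K)"
proof -
  obtain r x0 m where r: "r > 0"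
    and ball: "\<And>k y. k \<in> K \<Longrightarrow> y \<in> ball x0 r \<Longrightarrow> norm (A k y) \<le> real m"
    using banach_steinhaus_ball[OF pointwise] by metis
  have small: "norm (A k y) \<le> 2 * real m" if k: "k \<in> K" and y: "norm y < r" for k y
  proof -
    have "x0 + y \<in> ball x0 r" using y by (simp add: dist_norm)
    then have "norm (A k (x0 + y)) \<le> real m" by (rule ball[OF k])
    moreover have "norm (A k x0) \<le> real m" using r by (intro ball[OF k]) simp
    moreover have "A k y = A k (x0 + y) - A k x0" by (simp add: blinfun.add_right)
    ultimately show ?thesis using norm_triangle_ineq4[of "A k (x0 + y)" "A k x0"] by simp
  qed
  have "norm (A k) \<le> 4 * real m / r" if k: "k \<in> K" for k
  proof (rule norm_blinfun_bound)
    show "0 \<le> 4 * real m / r" using r by simp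
    show "norm (A k z) \<le> 4 * real m / r * norm z" for z
    proof (cases "z = 0")
      case False
      then have nz: "norm z > 0" by simp
      define y where "y = (r / (2 * norm z)) *\<^sub>R z"
      have "norm y = r / 2" unfolding y_def using nz r by simp
      then have "norm (A k y) \<le> 2 * real m" using small[OF k] r by simp
      moreover have "norm (A k y) = (r / (2 * norm z)) * norm (A k z)"
        unfolding y_def using nz r by (simp add: blinfun.scaleR_right)
      ultimately have "r * norm (A k z) \<le> 4 * real m * norm z" using nz by (simp add: field_simps)
      then show ?thesis using r by (simp add: field_simps)
    qed simp
  qed
  then show ?thesis by (auto simp: bdd_above_def)
qed

lemma op_norm_on_le:
  assumes "x0 \<in> C" "N x0 \<le> 1" "c \<ge> 0" "\<And>\<phi>. \<phi> \<in> C \<Longrightarrow> N (T \<phi>) \<le> c * N \<phi>"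
  shows "op_norm_on C N T \<le> c"
  unfolding op_norm_on_def
proof (rule cSup_least)
  show "(\<lambda>\<phi>. N (T \<phi>)) ` {\<phi>\<in>C. N \<phi> \<le> 1} \<noteq> {}" using assms(1,2) by blast
  fix y assume "y \<in> (\<lambda>\<phi>. N (T \<phi>)) ` {\<phi>\<in>C. N \<phi> \<le> 1}"
  then obtain \<phi> where "\<phi> \<in> C" "N \<phi> \<le> 1" "y = N (T \<phi>)" by blast
  then have "y \<le> c * N \<phi>" using assms(4) by blast
  also have "\<dots> \<le> c" using \<open>N \<phi> \<le> 1\<close> assms(3) by (simp add: mult_left_le)
  finally show "y \<le> c" .
qed

section \<open>Weighted norms on finite bipartite graphs\<close>

definition graph_A_perp :: "'v set \<Rightarrow> ('v \<Rightarrow> 'v \<Rightarrow> bool) \<Rightarrow> ('v \<Rightarrow> 'c) \<Rightarrow> ('v \<Rightarrow> real)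
      \<Rightarrow> ('v \<Rightarrow> 'e::real_normed_vector) \<Rightarrow> 'v \<Rightarrow> 'e" where
  "graph_A_perp V adj side m \<phi> = graph_A V adj m (\<lambda>v. \<phi> v - M_sides V side m \<phi> v)"

lemma bipartite_lambda_eq_Sup:
  "bipartite_lambda TYPE('e::real_normed_vector) V adj side m =
     Sup ((\<lambda>\<phi>::'v \<Rightarrow> 'e. wl2_norm V m (graph_A_perp V adj side m \<phi>)) ` {\<phi>. wl2_norm V m \<phi> \<le> 1})"
  unfolding bipartite_lambda_def graph_A_perp_def ..

lemma power2_wl2_norm:
  assumes "\<And>v. v \<in> V \<Longrightarrow> m v \<ge> 0"
  shows "(wl2_norm V m f)\<^sup>2 = (\<Sum>v\<in>V. m v * (norm (f v))\<^sup>2)"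
proof -
  have "0 \<le> (\<Sum>v\<in>V. m v * (norm (f v))\<^sup>2)" by (intro sum_nonneg mult_nonneg_nonneg) (simp_all add: assms)
  then show ?thesis unfolding wl2_norm_def by simp
qed

lemma wl2_norm_nonneg:
  assumes "\<And>v. v \<in> V \<Longrightarrow> m v \<ge> 0"
  shows "wl2_norm V m f \<ge> 0"
  unfolding wl2_norm_def using assms by (simp add: sum_nonneg)

lemma wl2_norm_scaleR:
  assumes "\<And>v. v \<in> V \<Longrightarrow> m v \<ge> 0"
  shows "wl2_norm V m (\<lambda>v. a *\<^sub>R f v) = \<bar>a\<bar> * wl2_norm V m f"
proof -
  have "(\<Sum>v\<in>V. m v * (norm (a *\<^sub>R f v))\<^sup>2) = a\<^sup>2 * (\<Sum>v\<in>V. m v * (norm (f v))\<^sup>2)"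
    by (simp add: sum_distrib_left power_mult_distrib algebra_simps)
  then show ?thesis unfolding wl2_norm_def by (simp add: real_sqrt_mult)
qed

lemma wl2_norm_eq_0_iff:
  assumes "finite V" "\<And>v. v \<in> V \<Longrightarrow> m v > 0"
  shows "wl2_norm V m f = 0 \<longleftrightarrow> (\<forall>v\<in>V. f v = 0)"
proof -
  have "wl2_norm V m f = 0 \<longleftrightarrow> (\<Sum>v\<in>V. m v * (norm (f v))\<^sup>2) = 0"
    using assms(2) unfolding wl2_norm_def by simp
  also have "\<dots> \<longleftrightarrow> (\<forall>v\<in>V. m v * (norm (f v))\<^sup>2 = 0)"
    using assms(1) by (rule sum_nonneg_eq_0_iff) (simp add: assms(2) less_imp_le)
  also have "\<dots> \<longleftrightarrow> (\<forall>v\<in>V. f v = 0)"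
    using assms(2) by (auto dest: less_imp_neq[symmetric])
  finally show ?thesis .
qed

lemma graph_A_perp_scaleR:
  "graph_A_perp V adj side m (\<lambda>v. a *\<^sub>R f v) v = a *\<^sub>R graph_A_perp V adj side m f v"
proof -
  have "M_sides V side m (\<lambda>v. a *\<^sub>R f v) u = a *\<^sub>R M_sides V side m f u" for u
    unfolding M_sides_def Let_def by (simp add: scaleR_sum_right ac_simps)
  then show ?thesis
    unfolding graph_A_perp_def graph_A_def by (simp add: scaleR_sum_right scaleR_diff_right)
qed

lemma graph_A_perp_cong:
  "(\<And>v. v \<in> V \<Longrightarrow> f v = g v) \<Longrightarrow> graph_A_perp V adj side m f = graph_A_perp V adj side m g"
  unfolding graph_A_perp_def graph_A_def M_sides_def Let_def by (intro ext) simp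

lemma norm_le_one_if_wl2_norm_le_one:
  assumes "finite V" "\<And>v. v \<in> V \<Longrightarrow> m v \<ge> 1" "wl2_norm V m f \<le> 1" "v \<in> V"
  shows "norm (f v) \<le> 1"
proof -
  have m0: "m w \<ge> 0" if "w \<in> V" for w using assms(2)[OF that] by linarith
  have "(norm (f v))\<^sup>2 \<le> m v * (norm (f v))\<^sup>2" using assms(2)[OF assms(4)]
    by (simp add: mult_le_cancel_right1)
  also have "\<dots> \<le> (\<Sum>v\<in>V. m v * (norm (f v))\<^sup>2)"
    using assms(1,4) m0 by (intro member_le_sum) auto
  also have "\<dots> = (wl2_norm V m f)\<^sup>2" using m0 by (intro power2_wl2_norm[symmetric])
  also have "\<dots> \<le> 1" using m0 by (intro power_le_one wl2_norm_nonneg assms(3))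
  finally show ?thesis by (simp add: power_le_one_iff)
qed

lemma norm_M_sides_le:
  assumes "finite V" "\<And>v. v \<in> V \<Longrightarrow> m v > 0" "\<And>v. v \<in> V \<Longrightarrow> norm (f v) \<le> c" "u \<in> V"
  shows "norm (M_sides V side m f u) \<le> c"
proof -
  define S where "S = {w\<in>V. side w = side u}"
  have "S \<subseteq> V" "finite S" "u \<in> S" using assms(1,4) by (auto simp: S_def)
  then have pos: "(\<Sum>w\<in>S. m w) > 0" using assms(2) by (intro sum_pos2[of S u]) (auto intro: less_imp_le)
  have "norm (m w *\<^sub>R f w) \<le> m w * c" if "w \<in> S" for w
    using \<open>S \<subseteq> V\<close> assms(2,3) that by (auto intro: mult_left_mono less_imp_le simp: abs_of_pos)
  then have "norm (\<Sum>w\<in>S. m w *\<^sub>R f w) \<le> (\<Sum>w\<in>S. m w * c)"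
    by (intro order.trans[OF norm_sum] sum_mono)
  then have "norm (\<Sum>w\<in>S. m w *\<^sub>R f w) \<le> (\<Sum>w\<in>S. m w) * c" by (simp add: sum_distrib_right)
  then show ?thesis using pos unfolding M_sides_def Let_def S_def[symmetric] by (simp add: field_simps)
qed

lemma norm_graph_A_le:
  assumes "finite V" "m v \<ge> 1" "\<And>u. u \<in> V \<Longrightarrow> norm (f u) \<le> c"
  shows "norm (graph_A V adj m f v) \<le> c * card V"
proof -
  have "norm (\<Sum>u\<in>{u\<in>V. adj u v}. f u) \<le> (\<Sum>u\<in>{u\<in>V. adj u v}. c)"
    using assms(3) by (intro order.trans[OF norm_sum] sum_mono) auto
  also have "\<dots> = c * card {u\<in>V. adj u v}" by simp
  also have "\<dots> \<le> c * card V"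
  proof (cases "V = {}")
    case False
    then have "c \<ge> 0" using assms(3) norm_ge_zero order.trans by blast
    then show ?thesis using assms(1) by (intro mult_left_mono) (auto intro: card_mono)
  qed simp
  finally have "norm (\<Sum>u\<in>{u\<in>V. adj u v}. f u) \<le> c * card V" .
  moreover have "0 \<le> 1 / m v" "1 / m v \<le> 1" using assms(2) by auto
  ultimately have "(1 / m v) * norm (\<Sum>u\<in>{u\<in>V. adj u v}. f u) \<le> 1 * (c * card V)"
    by (intro mult_mono) auto
  then show ?thesis unfolding graph_A_def using assms(2) by (simp add: abs_of_pos)
qed

lemma bdd_above_bipartite_image:
  fixes V :: "'v set" and m :: "'v \<Rightarrow> real"
  assumes V: "finite V" and m: "\<And>v. v \<in> V \<Longrightarrow> m v \<ge> 1"
  shows "bdd_above ((\<lambda>\<phi>::'v \<Rightarrow> 'e::real_normed_vector. wl2_norm V m (graph_A_perp V adj side m \<phi>))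
            ` {\<phi>. wl2_norm V m \<phi> \<le> 1})"
proof (rule bdd_aboveI2)
  fix \<phi> :: "'v \<Rightarrow> 'e" assume "\<phi> \<in> {\<phi>. wl2_norm V m \<phi> \<le> 1}"
  then have unit: "norm (\<phi> v) \<le> 1" if "v \<in> V" for v
    using norm_le_one_if_wl2_norm_le_one[of V m \<phi> v] V m that by simp
  have m_pos: "m v > 0" if "v \<in> V" for v using m[OF that] by linarith
  have "norm (\<phi> u - M_sides V side m \<phi> u) \<le> 2" if "u \<in> V" for u
    using norm_triangle_ineq4[of "\<phi> u" "M_sides V side m \<phi> u"] unit[OF that]
      norm_M_sides_le[of V m \<phi> 1 u side] V m_pos unit that by force
  then have "norm (graph_A_perp V adj side m \<phi> v) \<le> 2 * real (card V)" if "v \<in> V" for v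
    unfolding graph_A_perp_def by (rule norm_graph_A_le[where m = m, OF V m[OF that]])
  then have "(norm (graph_A_perp V adj side m \<phi> v))\<^sup>2 \<le> (2 * real (card V))\<^sup>2" if "v \<in> V" for v
    using that by (intro power_mono) auto
  then have "(\<Sum>v\<in>V. m v * (norm (graph_A_perp V adj side m \<phi> v))\<^sup>2) \<le> (\<Sum>v\<in>V. m v * (2 * card V)\<^sup>2)"
    using m_pos by (intro sum_mono mult_left_mono) (auto intro: less_imp_le)
  then show "wl2_norm V m (graph_A_perp V adj side m \<phi>) \<le> sqrt (\<Sum>v\<in>V. m v * (2 * card V)\<^sup>2)"
    unfolding wl2_norm_def by (rule real_sqrt_le_mono)
qed

lemma wl2_norm_graph_A_perp_le:
  fixes f :: "'v \<Rightarrow> 'e::real_normed_vector"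
  assumes V: "finite V" and m: "\<And>v. v \<in> V \<Longrightarrow> m v \<ge> 1"
  shows "wl2_norm V m (graph_A_perp V adj side m f) \<le> bipartite_lambda TYPE('e) V adj side m * wl2_norm V m f"
proof -
  have m_pos: "m v > 0" if "v \<in> V" for v using m[OF that] by linarith
  have m0: "m v \<ge> 0" if "v \<in> V" for v using m_pos[OF that] by simp
  let ?r = "wl2_norm V m f"
  show ?thesis
  proof (cases "?r = 0")
    case True
    then have "graph_A_perp V adj side m f = graph_A_perp V adj side m (\<lambda>_. 0)"
      using wl2_norm_eq_0_iff[of V m f] V m_pos by (intro graph_A_perp_cong) blast
    then show ?thesis using True by (simp add: graph_A_perp_def graph_A_def M_sides_def wl2_norm_def)
  next
    case False
    moreover have "?r \<ge> 0" using m0 by (rule wl2_norm_nonneg)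
    ultimately have r: "?r > 0" by linarith
    define h where "h v = (1 / ?r) *\<^sub>R f v" for v
    have "wl2_norm V m h = 1" unfolding h_def using r by (simp add: wl2_norm_scaleR m0)
    then have "wl2_norm V m (graph_A_perp V adj side m h) \<le> bipartite_lambda TYPE('e) V adj side m"
      unfolding bipartite_lambda_eq_Sup by (intro cSup_upper bdd_above_bipartite_image V m) auto
    moreover have "graph_A_perp V adj side m h = (\<lambda>v. (1 / ?r) *\<^sub>R graph_A_perp V adj side m f v)"
      unfolding h_def by (intro ext graph_A_perp_scaleR)
    ultimately have "(1 / ?r) * wl2_norm V m (graph_A_perp V adj side m f) \<le> bipartite_lambda TYPE('e) V adj side m"
      using r by (simp add: wl2_norm_scaleR m0)
    then show ?thesis using r by (simp add: field_simps mult.commute)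
  qed
qed

lemma bipartite_lambda_nonneg:
  assumes V: "finite V" and m: "\<And>v. v \<in> V \<Longrightarrow> m v \<ge> 1"
  shows "bipartite_lambda TYPE('e::real_normed_vector) V adj side m \<ge> 0"
proof -
  have m0: "m v \<ge> 0" if "v \<in> V" for v using m[OF that] by linarith
  have "0 \<le> wl2_norm V m (graph_A_perp V adj side m (\<lambda>_. 0::'e))"
    using m0 by (rule wl2_norm_nonneg)
  also have "\<dots> \<le> bipartite_lambda TYPE('e) V adj side m"
    unfolding bipartite_lambda_eq_Sup by (intro cSup_upper bdd_above_bipartite_image V m)
      (auto simp: wl2_norm_def)
  finally show ?thesis .
qed

section \<open>Partite complexes\<close>

definition typed_face :: "('v \<Rightarrow> nat) \<Rightarrow> 'v set \<Rightarrow> nat set \<Rightarrow> 'v set" where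
  "typed_face col \<sigma> \<kappa> = {v\<in>\<sigma>. col v \<in> \<kappa>}"

lemma typed_face_subset: "typed_face col \<sigma> \<kappa> \<subseteq> \<sigma>"
  by (auto simp: typed_face_def)

locale partite_complex =
  fixes n :: nat and X :: "'a set set" and col :: "'a \<Rightarrow> nat"
  assumes pure_partite: "pure_partite_complex n X col"
begin

abbreviation chambers :: "'a set set" where
  "chambers \<equiv> faces X n"

definition colour_vertex :: "nat \<Rightarrow> 'a set \<Rightarrow> 'a" where
  "colour_vertex \<gamma> \<sigma> = inv_into \<sigma> col \<gamma>"

lemma simplicial: "simplicial_complex X"
  and simplex_in_chamber: "\<sigma> \<in> X \<Longrightarrow> \<exists>\<sigma>'\<in>chambers. \<sigma> \<subseteq> \<sigma>'"
  and chambers_nonempty: "chambers \<noteq> {}"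
  and bij_betw_col_chamber: "\<sigma> \<in> chambers \<Longrightarrow> bij_betw col \<sigma> {0..n}"
  using pure_partite unfolding pure_partite_complex_def by blast+

lemma simplex_finite: "\<sigma> \<in> X \<Longrightarrow> finite \<sigma>"
  and simplex_nonempty: "\<sigma> \<in> X \<Longrightarrow> \<sigma> \<noteq> {}"
  and simplex_face: "\<sigma> \<in> X \<Longrightarrow> \<rho> \<subseteq> \<sigma> \<Longrightarrow> \<rho> \<noteq> {} \<Longrightarrow> \<rho> \<in> X"
  using simplicial unfolding simplicial_complex_def by blast+

lemma chamber_simplex: "\<sigma> \<in> chambers \<Longrightarrow> \<sigma> \<in> X"
  and card_chamber: "\<sigma> \<in> chambers \<Longrightarrow> card \<sigma> = n + 1"
  by (simp_all add: faces_def)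

lemma inj_on_col_chamber: "\<sigma> \<in> chambers \<Longrightarrow> inj_on col \<sigma>"
  and col_image_chamber: "\<sigma> \<in> chambers \<Longrightarrow> col ` \<sigma> = {0..n}"
  using bij_betw_col_chamber by (simp_all add: bij_betw_def)

lemma simplex_subset_vertices: "\<sigma> \<in> X \<Longrightarrow> \<sigma> \<subseteq> vertices X"
  using simplex_face[of \<sigma> "{v}" for v] by (auto simp: vertices_def)

lemma colour_vertex:
  assumes "\<sigma> \<in> chambers" "\<gamma> \<le> n"
  shows colour_vertex_mem: "colour_vertex \<gamma> \<sigma> \<in> \<sigma>"
    and col_colour_vertex: "col (colour_vertex \<gamma> \<sigma>) = \<gamma>"
proof -
  have "\<gamma> \<in> col ` \<sigma>" using assms col_image_chamber by auto
  then show "colour_vertex \<gamma> \<sigma> \<in> \<sigma>" "col (colour_vertex \<gamma> \<sigma>) = \<gamma>"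
    unfolding colour_vertex_def by (simp_all add: inv_into_into f_inv_into_f)
qed

lemma colour_vertex_eq: "\<sigma> \<in> chambers \<Longrightarrow> x \<in> \<sigma> \<Longrightarrow> colour_vertex (col x) \<sigma> = x"
  unfolding colour_vertex_def by (metis inj_on_col_chamber inv_into_f_f)

lemma col_image_typed_face:
  assumes "\<sigma> \<in> chambers" "\<kappa> \<subseteq> {0..n}"
  shows "col ` typed_face col \<sigma> \<kappa> = \<kappa>"
  using assms col_image_chamber by (auto simp: typed_face_def image_iff) (metis atLeastAtMost_iff image_iff subsetD)

lemma card_typed_face: "\<sigma> \<in> chambers \<Longrightarrow> \<kappa> \<subseteq> {0..n} \<Longrightarrow> card (typed_face col \<sigma> \<kappa>) = card \<kappa>"
  by (metis col_image_typed_face typed_face_subset inj_on_col_chamber card_image inj_on_subset)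

lemma typed_face_unique:
  assumes "\<sigma> \<in> chambers" "\<rho> \<subseteq> \<sigma>"
  shows "\<rho> = typed_face col \<sigma> (col ` \<rho>)"
  using assms inj_on_col_chamber[OF assms(1)] unfolding typed_face_def inj_on_def by blast

lemma typed_face_simplex:
  "\<sigma> \<in> chambers \<Longrightarrow> \<kappa> \<subseteq> {0..n} \<Longrightarrow> \<kappa> \<noteq> {} \<Longrightarrow> typed_face col \<sigma> \<kappa> \<in> X"
  by (metis chamber_simplex simplex_face col_image_typed_face typed_face_subset image_empty)

lemma sim_nu_iff_typed_face_subset:
  assumes "\<sigma>' \<in> chambers" "\<sigma> \<in> chambers" "\<kappa> \<subseteq> {0..n}" "\<kappa> \<noteq> {}"
  shows "sim_nu X col \<kappa> \<sigma>' \<sigma> \<longleftrightarrow> typed_face col \<sigma> \<kappa> \<subseteq> \<sigma>'"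
proof
  assume "sim_nu X col \<kappa> \<sigma>' \<sigma>"
  then obtain \<rho> where "\<rho> \<subseteq> \<sigma>' \<inter> \<sigma>" "col ` \<rho> = \<kappa>" unfolding sim_nu_def stype_def by auto
  then show "typed_face col \<sigma> \<kappa> \<subseteq> \<sigma>'" using typed_face_unique[OF assms(2), of \<rho>] by auto
next
  assume "typed_face col \<sigma> \<kappa> \<subseteq> \<sigma>'"
  then show "sim_nu X col \<kappa> \<sigma>' \<sigma>" unfolding sim_nu_def stype_def
    using typed_face_simplex[OF assms(2-4)] col_image_typed_face[OF assms(2,3)] typed_face_subset[of col \<sigma> \<kappa>]
    by (intro exI[of _ "typed_face col \<sigma> \<kappa>"]) auto
qed

lemma P_op_chamber_eq_average:
  assumes "\<sigma> \<in> chambers" "\<kappa> \<subseteq> {0..n}" "\<kappa> \<noteq> {}"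
  shows "P_op n X col \<kappa> \<phi> \<sigma> = (1 / real (card {\<sigma>'\<in>chambers. typed_face col \<sigma> \<kappa> \<subseteq> \<sigma>'}))
    *\<^sub>R (\<Sum>\<sigma>'\<in>{\<sigma>'\<in>chambers. typed_face col \<sigma> \<kappa> \<subseteq> \<sigma>'}. \<phi> \<sigma>')"
proof -
  have "{\<sigma>'\<in>chambers. sim_nu X col \<kappa> \<sigma>' \<sigma>} = {\<sigma>'\<in>chambers. typed_face col \<sigma> \<kappa> \<subseteq> \<sigma>'}"
    using sim_nu_iff_typed_face_subset[OF _ assms] by blast
  then show ?thesis unfolding P_op_def Let_def using assms(1) by simp
qed

end

section \<open>Stars of faces of codimension two\<close>

definition P_defect :: "nat \<Rightarrow> 'a set set \<Rightarrow> ('a \<Rightarrow> nat) \<Rightarrow> nat set \<Rightarrow> nat set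
      \<Rightarrow> ('a set \<Rightarrow> 'e::real_normed_vector) \<Rightarrow> 'a set \<Rightarrow> 'e" where
  "P_defect n X col \<nu> \<nu>' \<phi> \<sigma> = P_op n X col \<nu> (P_op n X col \<nu>' \<phi>) \<sigma> - P_op n X col (\<nu> \<inter> \<nu>') \<phi> \<sigma>"

locale codim2_star = partite_complex +
  fixes \<tau> and \<alpha> \<beta> :: nat
  assumes n2: "n \<ge> 2" and \<tau>_face: "\<tau> \<in> faces X (n - 2)"
    and \<alpha>: "\<alpha> \<le> n" and \<beta>: "\<beta> \<le> n" and \<alpha>\<beta>: "\<alpha> \<noteq> \<beta>"
    and col_\<tau>: "col ` \<tau> = {0..n} - {\<alpha>, \<beta>}"
    and finite_link: "finite (link_vertices X \<tau>)"
begin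

definition star :: "'a set set" where
  "star = {\<sigma>\<in>chambers. \<tau> \<subseteq> \<sigma>}"

abbreviation lk :: "'a set" where "lk \<equiv> link_vertices X \<tau>"
abbreviation adj :: "'a \<Rightarrow> 'a \<Rightarrow> bool" where "adj \<equiv> link_adj n X \<tau>"
abbreviation deg :: "'a \<Rightarrow> real" where "deg \<equiv> link_weight n X \<tau>"

lemma star_chamber: "\<sigma> \<in> star \<Longrightarrow> \<sigma> \<in> chambers"
  and \<tau>_subset_star: "\<sigma> \<in> star \<Longrightarrow> \<tau> \<subseteq> \<sigma>"
  by (simp_all add: star_def)

lemma finite_\<tau>: "finite \<tau>" and card_\<tau>: "card \<tau> = n - 1"
  using \<tau>_face n2 simplex_finite by (auto simp: faces_def)

lemma col_notin_\<tau>: "x \<in> \<tau> \<Longrightarrow> col x \<noteq> \<alpha> \<and> col x \<noteq> \<beta>"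
  using col_\<tau> by blast

lemma star_eq_insert: "\<sigma> \<in> star \<Longrightarrow> \<sigma> = insert (colour_vertex \<alpha> \<sigma>) (insert (colour_vertex \<beta> \<sigma>) \<tau>)"
proof -
  assume \<sigma>: "\<sigma> \<in> star"
  have "\<tau> = typed_face col \<sigma> ({0..n} - {\<alpha>, \<beta>})"
    using typed_face_unique[OF star_chamber[OF \<sigma>] \<tau>_subset_star[OF \<sigma>]] col_\<tau> by simp
  moreover have "x = colour_vertex \<alpha> \<sigma> \<or> x = colour_vertex \<beta> \<sigma> \<or> col x \<in> {0..n} - {\<alpha>, \<beta>}"
    if "x \<in> \<sigma>" for x
    using that colour_vertex_eq[OF star_chamber[OF \<sigma>] that] col_image_chamber[OF star_chamber[OF \<sigma>]]
    by fastforce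
  ultimately show ?thesis
    using \<sigma> colour_vertex[OF star_chamber[OF \<sigma>]] \<alpha> \<beta> \<tau>_subset_star[OF \<sigma>]
    unfolding typed_face_def by blast
qed

lemma colour_vertex_star:
  assumes "\<sigma> \<in> star" "\<gamma> \<in> {\<alpha>, \<beta>}"
  shows "colour_vertex \<gamma> \<sigma> \<in> \<sigma>" "col (colour_vertex \<gamma> \<sigma>) = \<gamma>"
    "colour_vertex \<gamma> \<sigma> \<notin> \<tau>" "colour_vertex \<gamma> \<sigma> \<in> lk"
proof -
  have \<sigma>: "\<sigma> \<in> chambers" "\<tau> \<subseteq> \<sigma>" using assms(1) by (simp_all add: star_def)
  show v: "colour_vertex \<gamma> \<sigma> \<in> \<sigma>" "col (colour_vertex \<gamma> \<sigma>) = \<gamma>"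
    using colour_vertex[OF \<sigma>(1)] assms(2) \<alpha> \<beta> by auto
  show nt: "colour_vertex \<gamma> \<sigma> \<notin> \<tau>" using v(2) assms(2) col_notin_\<tau> by blast
  have "insert (colour_vertex \<gamma> \<sigma>) \<tau> \<in> X"
    using simplex_face[OF chamber_simplex[OF \<sigma>(1)]] v(1) \<sigma>(2) by blast
  then show "colour_vertex \<gamma> \<sigma> \<in> lk" using nt by (simp add: link_vertices_def)
qed

lemma link_adj_iff: "adj u w \<longleftrightarrow> insert u (insert w \<tau>) \<in> chambers"
  unfolding link_adj_def by (simp add: insert_commute)

lemma link_adj_star:
  assumes "adj u w"
  shows "insert u (insert w \<tau>) \<in> star" "u \<notin> \<tau>" "w \<notin> \<tau>" "u \<noteq> w"
proof -
  have c: "insert u (insert w \<tau>) \<in> chambers" using assms link_adj_iff by blast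
  then show "insert u (insert w \<tau>) \<in> star" by (auto simp: star_def)
  have card: "card (insert u (insert w \<tau>)) = Suc (Suc (card \<tau>))"
    using card_chamber[OF c] card_\<tau> n2 by simp
  have "card (insert w \<tau>) \<le> Suc (card \<tau>)" using finite_\<tau> by (simp add: card_insert_if)
  then have u: "u \<notin> insert w \<tau>" using card by (metis insert_absorb not_less_eq_eq order_refl)
  then have "card (insert w \<tau>) = Suc (card \<tau>)" using card finite_\<tau> by simp
  then have "w \<notin> \<tau>" by (metis insert_absorb n_not_Suc_n)
  then show "u \<notin> \<tau>" "w \<notin> \<tau>" "u \<noteq> w" using u by auto
qed

lemma link_adj_vertices: "adj u w \<Longrightarrow> u \<in> lk \<and> w \<in> lk"
proof -
  assume a: "adj u w"
  have "insert u (insert w \<tau>) \<in> X" using link_adj_star(1)[OF a] star_chamber chamber_simplex by blast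
  then have "insert u \<tau> \<in> X" "insert w \<tau> \<in> X" using simplex_face by blast+
  then show ?thesis using link_adj_star[OF a] by (simp add: link_vertices_def)
qed

lemma link_adj_col: "adj u w \<Longrightarrow> col u \<noteq> col w"
  using inj_on_col_chamber[OF star_chamber[OF link_adj_star(1)]] link_adj_star(4)
  unfolding inj_on_def by blast

lemma link_vertex:
  assumes "w \<in> lk"
  shows "w \<notin> \<tau>" "\<exists>\<sigma>\<in>star. w \<in> \<sigma>" "col w = \<alpha> \<or> col w = \<beta>"
proof -
  show nt: "w \<notin> \<tau>" using assms by (simp add: link_vertices_def)
  have "insert w \<tau> \<in> X" using assms by (simp add: link_vertices_def)
  then obtain \<sigma> where \<sigma>: "\<sigma> \<in> chambers" "insert w \<tau> \<subseteq> \<sigma>" using simplex_in_chamber by blast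
  then have "\<sigma> \<in> star" by (simp add: star_def)
  then show "\<exists>\<sigma>\<in>star. w \<in> \<sigma>" using \<sigma> by blast
  have "w \<in> insert (colour_vertex \<alpha> \<sigma>) (insert (colour_vertex \<beta> \<sigma>) \<tau>)"
    using star_eq_insert[OF \<open>\<sigma> \<in> star\<close>] \<sigma> by blast
  then show "col w = \<alpha> \<or> col w = \<beta>" using nt colour_vertex_star[OF \<open>\<sigma> \<in> star\<close>] by auto
qed

lemma finite_star: "finite star"
proof -
  have "star \<subseteq> (\<lambda>(u, w). insert u (insert w \<tau>)) ` (lk \<times> lk)"
  proof
    fix \<sigma> assume \<sigma>: "\<sigma> \<in> star"
    then show "\<sigma> \<in> (\<lambda>(u, w). insert u (insert w \<tau>)) ` (lk \<times> lk)"
      using star_eq_insert[OF \<sigma>] colour_vertex_star(4)[OF \<sigma>] by (intro image_eqI[of _ _ "(colour_vertex \<alpha> \<sigma>, colour_vertex \<beta> \<sigma>)"]) auto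
  qed
  then show ?thesis using finite_link by (meson finite_SigmaI finite_imageI finite_subset)
qed

lemma bij_betw_neighbours_star:
  assumes "w \<notin> \<tau>"
  shows "bij_betw (\<lambda>u. insert u (insert w \<tau>)) {u. adj u w} {\<sigma>\<in>star. w \<in> \<sigma>}"
proof (rule bij_betw_imageI)
  show "inj_on (\<lambda>u. insert u (insert w \<tau>)) {u. adj u w}"
  proof (rule inj_onI)
    fix u u' assume "u \<in> {u. adj u w}" "u' \<in> {u. adj u w}"
      and eq: "insert u (insert w \<tau>) = insert u' (insert w \<tau>)"
    then have "u \<notin> insert w \<tau>" "u' \<notin> insert w \<tau>" using link_adj_star(2,4) by auto
    then show "u = u'" using eq by (metis insertE insertI1)
  qed
  have "\<sigma> \<in> (\<lambda>u. insert u (insert w \<tau>)) ` {u. adj u w}" if \<sigma>: "\<sigma> \<in> star" "w \<in> \<sigma>" for \<sigma>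
  proof -
    have eq: "\<sigma> = insert (colour_vertex \<alpha> \<sigma>) (insert (colour_vertex \<beta> \<sigma>) \<tau>)"
      by (rule star_eq_insert[OF \<sigma>(1)])
    then have "w = colour_vertex \<alpha> \<sigma> \<or> w = colour_vertex \<beta> \<sigma>" using \<sigma>(2) assms by blast
    then have "\<exists>u. \<sigma> = insert u (insert w \<tau>)"
    proof
      assume "w = colour_vertex \<alpha> \<sigma>"
      then have "\<sigma> = insert (colour_vertex \<beta> \<sigma>) (insert w \<tau>)" using eq by (simp add: insert_commute)
      then show ?thesis ..
    next
      assume "w = colour_vertex \<beta> \<sigma>"
      then show ?thesis using eq by blast
    qed
    then obtain u where u: "\<sigma> = insert u (insert w \<tau>)" ..
    then have "adj u w" using link_adj_iff star_chamber[OF \<sigma>(1)] by simp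
    then show ?thesis using u by blast
  qed
  moreover have "insert u (insert w \<tau>) \<in> {\<sigma>\<in>star. w \<in> \<sigma>}" if "adj u w" for u
    using link_adj_star(1)[OF that] by simp
  ultimately show "(\<lambda>u. insert u (insert w \<tau>)) ` {u. adj u w} = {\<sigma>\<in>star. w \<in> \<sigma>}" by blast
qed

lemma deg_eq_card_star:
  assumes "w \<notin> \<tau>"
  shows "deg w = real (card {\<sigma>\<in>star. w \<in> \<sigma>})"
proof -
  have "card {u. adj u w} = card {\<sigma>\<in>star. w \<in> \<sigma>}"
    by (rule bij_betw_same_card[OF bij_betw_neighbours_star[OF assms]])
  then show ?thesis unfolding link_weight_def by (rule arg_cong)
qed

lemma deg_ge_1: "w \<in> lk \<Longrightarrow> deg w \<ge> 1"
proof -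
  assume w: "w \<in> lk"
  then have "{\<sigma>\<in>star. w \<in> \<sigma>} \<noteq> {}" using link_vertex(2) by blast
  then have "card {\<sigma>\<in>star. w \<in> \<sigma>} \<ge> 1" using finite_star by (simp add: Suc_leI card_gt_0_iff)
  then show ?thesis using deg_eq_card_star link_vertex(1)[OF w] by simp
qed

lemma sum_star_by_colour:
  assumes "\<gamma> \<in> {\<alpha>, \<beta>}"
  shows "(\<Sum>w\<in>{w\<in>lk. col w = \<gamma>}. \<Sum>\<sigma>\<in>{\<sigma>\<in>star. w \<in> \<sigma>}. f \<sigma>) = sum f star"
proof -
  have "(\<Sum>w\<in>{w\<in>lk. col w = \<gamma>}. \<Sum>\<sigma>\<in>{\<sigma>\<in>star. w \<in> \<sigma>}. f \<sigma>)
      = (\<Sum>\<sigma>\<in>star. \<Sum>w\<in>{w\<in>{w\<in>lk. col w = \<gamma>}. w \<in> \<sigma>}. f \<sigma>)"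
    using sum.swap_restrict[OF _ finite_star, of "{w\<in>lk. col w = \<gamma>}" "\<lambda>w \<sigma>. f \<sigma>" "\<lambda>w \<sigma>. w \<in> \<sigma>"]
      finite_link by simp
  also have "\<dots> = sum f star"
  proof (rule sum.cong[OF refl])
    fix \<sigma> assume \<sigma>: "\<sigma> \<in> star"
    have "{w\<in>{w\<in>lk. col w = \<gamma>}. w \<in> \<sigma>} = {colour_vertex \<gamma> \<sigma>}"
      using colour_vertex_star[OF \<sigma> assms] by (auto dest: colour_vertex_eq[OF star_chamber[OF \<sigma>]])
    then show "(\<Sum>w\<in>{w\<in>{w\<in>lk. col w = \<gamma>}. w \<in> \<sigma>}. f \<sigma>) = f \<sigma>" by simp
  qed
  finally show ?thesis .
qed

lemma typed_face_drop_colour: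
  assumes \<sigma>: "\<sigma> \<in> star" and \<gamma>: "{\<gamma>, \<gamma>'} = {\<alpha>, \<beta>}" "\<gamma> \<noteq> \<gamma>'"
  shows "typed_face col \<sigma> ({0..n} - {\<gamma>'}) = insert (colour_vertex \<gamma> \<sigma>) \<tau>"
proof -
  have "\<gamma> \<in> {\<alpha>, \<beta>}" "\<gamma>' \<in> {\<alpha>, \<beta>}" using \<gamma>(1) by blast+
  note v = colour_vertex_star[OF \<sigma> this(1)] colour_vertex_star[OF \<sigma> this(2)]
  have "\<sigma> = insert (colour_vertex \<gamma> \<sigma>) (insert (colour_vertex \<gamma>' \<sigma>) \<tau>)"
    using star_eq_insert[OF \<sigma>] \<gamma> by (cases "\<gamma> = \<alpha>") (auto simp: doubleton_eq_iff insert_commute)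
  moreover have "col x \<in> {0..n}" if "x \<in> \<sigma>" for x using that col_image_chamber[OF star_chamber[OF \<sigma>]] by blast
  ultimately show ?thesis using v \<gamma> col_notin_\<tau> \<alpha> \<beta> unfolding typed_face_def by auto
qed

definition star_average :: "('a set \<Rightarrow> 'e::real_normed_vector) \<Rightarrow> 'a \<Rightarrow> 'e" where
  "star_average \<phi> w = (1 / deg w) *\<^sub>R (\<Sum>\<sigma>\<in>{\<sigma>\<in>star. w \<in> \<sigma>}. \<phi> \<sigma>)"

definition star_mean :: "('a set \<Rightarrow> 'e::real_normed_vector) \<Rightarrow> 'e" where
  "star_mean \<phi> = (1 / real (card star)) *\<^sub>R sum \<phi> star"

lemma P_op_drop_colour:
  assumes \<sigma>: "\<sigma> \<in> star" and \<gamma>: "{\<gamma>, \<gamma>'} = {\<alpha>, \<beta>}" "\<gamma> \<noteq> \<gamma>'"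
  shows "P_op n X col ({0..n} - {\<gamma>'}) \<phi> \<sigma> = star_average \<phi> (colour_vertex \<gamma> \<sigma>)"
proof -
  let ?w = "colour_vertex \<gamma> \<sigma>"
  have \<gamma>\<alpha>\<beta>: "\<gamma> \<in> {\<alpha>, \<beta>}" using \<gamma>(1) by blast
  then have "\<gamma> \<in> {0..n} - {\<gamma>'}" using \<gamma>(2) \<alpha> \<beta> by auto
  then have ne: "{0..n} - {\<gamma>'} \<noteq> {}" by blast
  have S: "{\<sigma>'\<in>chambers. insert ?w \<tau> \<subseteq> \<sigma>'} = {\<sigma>'\<in>star. ?w \<in> \<sigma>'}" by (auto simp: star_def)
  have "P_op n X col ({0..n} - {\<gamma>'}) \<phi> \<sigma>
      = (1 / real (card {\<sigma>'\<in>star. ?w \<in> \<sigma>'})) *\<^sub>R (\<Sum>\<sigma>'\<in>{\<sigma>'\<in>star. ?w \<in> \<sigma>'}. \<phi> \<sigma>')"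
    using P_op_chamber_eq_average[OF star_chamber[OF \<sigma>] _ ne, of \<phi>]
    unfolding typed_face_drop_colour[OF \<sigma> \<gamma>] S by simp
  also have "\<dots> = star_average \<phi> ?w"
    unfolding star_average_def deg_eq_card_star[OF colour_vertex_star(3)[OF \<sigma> \<gamma>\<alpha>\<beta>]] ..
  finally show ?thesis .
qed

lemma P_op_type_\<tau>:
  assumes \<sigma>: "\<sigma> \<in> star"
  shows "P_op n X col ({0..n} - {\<alpha>, \<beta>}) \<phi> \<sigma> = star_mean \<phi>"
proof -
  have "\<tau> \<noteq> {}" using \<tau>_face simplex_nonempty by (auto simp: faces_def)
  then have ne: "{0..n} - {\<alpha>, \<beta>} \<noteq> {}" using col_\<tau> by auto
  have "typed_face col \<sigma> ({0..n} - {\<alpha>, \<beta>}) = \<tau>"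
    using typed_face_unique[OF star_chamber[OF \<sigma>] \<tau>_subset_star[OF \<sigma>]] col_\<tau> by simp
  then show ?thesis
    using P_op_chamber_eq_average[OF star_chamber[OF \<sigma>] _ ne, of \<phi>] by (simp add: star_def star_mean_def)
qed

lemma P_op_drop_alpha_beta:
  assumes \<sigma>: "\<sigma> \<in> star"
  shows "P_op n X col ({0..n} - {\<alpha>}) (P_op n X col ({0..n} - {\<beta>}) \<phi>) \<sigma>
    = (1 / deg (colour_vertex \<beta> \<sigma>)) *\<^sub>R (\<Sum>u\<in>{u. adj u (colour_vertex \<beta> \<sigma>)}. star_average \<phi> u)"
proof -
  let ?b = "colour_vertex \<beta> \<sigma>"
  have b: "col ?b = \<beta>" "?b \<notin> \<tau>" using colour_vertex_star[OF \<sigma>] by auto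
  have \<beta>\<alpha>: "{\<beta>, \<alpha>} = {\<alpha>, \<beta>}" by blast
  have "P_op n X col ({0..n} - {\<alpha>}) (P_op n X col ({0..n} - {\<beta>}) \<phi>) \<sigma>
      = (1 / deg ?b) *\<^sub>R (\<Sum>\<sigma>'\<in>{\<sigma>'\<in>star. ?b \<in> \<sigma>'}. P_op n X col ({0..n} - {\<beta>}) \<phi> \<sigma>')"
    unfolding P_op_drop_colour[OF \<sigma> \<beta>\<alpha> \<alpha>\<beta>[symmetric]] star_average_def ..
  also have "(\<Sum>\<sigma>'\<in>{\<sigma>'\<in>star. ?b \<in> \<sigma>'}. P_op n X col ({0..n} - {\<beta>}) \<phi> \<sigma>')
      = (\<Sum>\<sigma>'\<in>{\<sigma>'\<in>star. ?b \<in> \<sigma>'}. star_average \<phi> (colour_vertex \<alpha> \<sigma>'))"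
    using P_op_drop_colour[OF _ refl \<alpha>\<beta>] by (intro sum.cong) auto
  also have "\<dots> = (\<Sum>u\<in>{u. adj u ?b}. star_average \<phi> (colour_vertex \<alpha> (insert u (insert ?b \<tau>))))"
    by (rule sum.reindex_bij_betw[OF bij_betw_neighbours_star[OF b(2)], symmetric])
  also have "\<dots> = (\<Sum>u\<in>{u. adj u ?b}. star_average \<phi> u)"
  proof (rule sum.cong[OF refl])
    fix u assume "u \<in> {u. adj u ?b}"
    then have u: "adj u ?b" by simp
    have "col u \<noteq> \<beta>" using link_adj_col[OF u] b(1) by simp
    then have "col u = \<alpha>" using link_vertex(3) link_adj_vertices[OF u] by blast
    moreover have "colour_vertex (col u) (insert u (insert ?b \<tau>)) = u"
      using u link_adj_iff by (intro colour_vertex_eq) auto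
    ultimately show "star_average \<phi> (colour_vertex \<alpha> (insert u (insert ?b \<tau>))) = star_average \<phi> u"
      by simp
  qed
  finally show ?thesis .
qed

definition link_lift :: "('a set \<Rightarrow> 'e::real_normed_vector) \<Rightarrow> 'a \<Rightarrow> 'e" where
  "link_lift \<phi> w = (if col w = \<alpha> then star_average \<phi> w else 0)"

lemma M_sides_link_lift:
  assumes u: "u \<in> lk" "col u = \<alpha>"
  shows "M_sides lk col deg (link_lift \<phi>) u = star_mean \<phi>"
proof -
  let ?A = "{w\<in>lk. col w = \<alpha>}"
  have deg: "deg w = real (card {\<sigma>\<in>star. w \<in> \<sigma>})" "deg w > 0" if "w \<in> ?A" for w
    using that deg_eq_card_star link_vertex(1) deg_ge_1[of w] by auto
  have "(\<Sum>w\<in>?A. deg w) = (\<Sum>w\<in>?A. \<Sum>\<sigma>\<in>{\<sigma>\<in>star. w \<in> \<sigma>}. 1)"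
    using deg(1) by (intro sum.cong) simp_all
  also have "\<dots> = real (card star)" using sum_star_by_colour[of \<alpha> "\<lambda>_. 1::real"] by simp
  finally have sum_deg: "(\<Sum>w\<in>?A. deg w) = real (card star)" .
  have "(\<Sum>w\<in>?A. deg w *\<^sub>R link_lift \<phi> w) = (\<Sum>w\<in>?A. \<Sum>\<sigma>\<in>{\<sigma>\<in>star. w \<in> \<sigma>}. \<phi> \<sigma>)"
  proof (rule sum.cong[OF refl])
    fix w assume "w \<in> ?A"
    then show "deg w *\<^sub>R link_lift \<phi> w = (\<Sum>\<sigma>\<in>{\<sigma>\<in>star. w \<in> \<sigma>}. \<phi> \<sigma>)"
      using deg(2)[of w] by (simp add: link_lift_def star_average_def)
  qed
  also have "\<dots> = sum \<phi> star" by (rule sum_star_by_colour) simp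
  finally show ?thesis
    unfolding M_sides_def Let_def star_mean_def u(2) sum_deg by simp
qed

lemma graph_A_perp_link_lift:
  assumes \<sigma>: "\<sigma> \<in> star"
  shows "graph_A_perp lk adj col deg (link_lift \<phi>) (colour_vertex \<beta> \<sigma>)
    = P_defect n X col ({0..n} - {\<alpha>}) ({0..n} - {\<beta>}) \<phi> \<sigma>"
proof -
  let ?b = "colour_vertex \<beta> \<sigma>"
  have b: "col ?b = \<beta>" "?b \<in> lk" using colour_vertex_star[OF \<sigma>] by auto
  have nbrs: "u \<in> lk" "col u = \<alpha>" if "adj u ?b" for u
    using that link_adj_vertices link_adj_col link_vertex(3) b(1) by force+
  then have "link_lift \<phi> u - M_sides lk col deg (link_lift \<phi>) u = star_average \<phi> u - star_mean \<phi>"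
    if "adj u ?b" for u
    using M_sides_link_lift[OF nbrs[OF that]] nbrs(2)[OF that] by (simp add: link_lift_def)
  moreover have "{u\<in>lk. adj u ?b} = {u. adj u ?b}" using nbrs by blast
  ultimately have "graph_A_perp lk adj col deg (link_lift \<phi>) ?b
      = (1 / deg ?b) *\<^sub>R (\<Sum>u\<in>{u. adj u ?b}. star_average \<phi> u - star_mean \<phi>)"
    unfolding graph_A_perp_def graph_A_def by simp
  also have "\<dots> = (1 / deg ?b) *\<^sub>R (\<Sum>u\<in>{u. adj u ?b}. star_average \<phi> u) - star_mean \<phi>"
    using deg_ge_1[OF b(2)]
    by (simp add: sum_subtractf link_weight_def scaleR_diff_right sum_constant_scaleR)
  also have "\<dots> = P_defect n X col ({0..n} - {\<alpha>}) ({0..n} - {\<beta>}) \<phi> \<sigma>"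
  proof -
    have "({0..n} - {\<alpha>}) \<inter> ({0..n} - {\<beta>}) = {0..n} - {\<alpha>, \<beta>}" by blast
    then show ?thesis unfolding P_defect_def P_op_drop_alpha_beta[OF \<sigma>] by (simp add: P_op_type_\<tau>[OF \<sigma>])
  qed
  finally show ?thesis .
qed

lemma sum_norm_P_defect_le:
  "(\<Sum>\<sigma>\<in>star. (norm (P_defect n X col ({0..n} - {\<alpha>}) ({0..n} - {\<beta>}) \<phi> \<sigma>))\<^sup>2)
     \<le> (wl2_norm lk deg (graph_A_perp lk adj col deg (link_lift \<phi>)))\<^sup>2"
proof -
  let ?g = "graph_A_perp lk adj col deg (link_lift \<phi>)"
  have deg0: "deg v \<ge> 0" if "v \<in> lk" for v using deg_ge_1[OF that] by linarith
  have "(\<Sum>\<sigma>\<in>star. (norm (P_defect n X col ({0..n} - {\<alpha>}) ({0..n} - {\<beta>}) \<phi> \<sigma>))\<^sup>2)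
      = (\<Sum>\<sigma>\<in>star. (norm (?g (colour_vertex \<beta> \<sigma>)))\<^sup>2)"
    by (intro sum.cong refl) (simp add: graph_A_perp_link_lift)
  also have "\<dots> = (\<Sum>b\<in>{b\<in>lk. col b = \<beta>}. \<Sum>\<sigma>\<in>{\<sigma>\<in>star. b \<in> \<sigma>}. (norm (?g (colour_vertex \<beta> \<sigma>)))\<^sup>2)"
    by (rule sum_star_by_colour[symmetric]) simp
  also have "\<dots> = (\<Sum>b\<in>{b\<in>lk. col b = \<beta>}. deg b * (norm (?g b))\<^sup>2)"
  proof (rule sum.cong[OF refl])
    fix b assume b: "b \<in> {b\<in>lk. col b = \<beta>}"
    have "colour_vertex \<beta> \<sigma> = b" if "\<sigma> \<in> {\<sigma>\<in>star. b \<in> \<sigma>}" for \<sigma>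
      using that b colour_vertex_eq[of \<sigma> b] star_chamber by auto
    then show "(\<Sum>\<sigma>\<in>{\<sigma>\<in>star. b \<in> \<sigma>}. (norm (?g (colour_vertex \<beta> \<sigma>)))\<^sup>2) = deg b * (norm (?g b))\<^sup>2"
      using b link_vertex(1) by (simp add: deg_eq_card_star)
  qed
  also have "\<dots> \<le> (\<Sum>v\<in>lk. deg v * (norm (?g v))\<^sup>2)"
    using deg0 by (intro sum_mono2 finite_link) auto
  also have "\<dots> = (wl2_norm lk deg ?g)\<^sup>2" using deg0 by (rule power2_wl2_norm[symmetric])
  finally show ?thesis .
qed

lemma wl2_norm_link_lift_le: "(wl2_norm lk deg (link_lift \<phi>))\<^sup>2 \<le> (\<Sum>\<sigma>\<in>star. (norm (\<phi> \<sigma>))\<^sup>2)"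
proof -
  have deg0: "deg v \<ge> 0" if "v \<in> lk" for v using deg_ge_1[OF that] by linarith
  have "(wl2_norm lk deg (link_lift \<phi>))\<^sup>2 = (\<Sum>v\<in>lk. deg v * (norm (link_lift \<phi> v))\<^sup>2)"
    using deg0 by (rule power2_wl2_norm)
  also have "\<dots> = (\<Sum>v\<in>lk. if col v = \<alpha> then deg v * (norm (star_average \<phi> v))\<^sup>2 else 0)"
    by (intro sum.cong refl) (simp add: link_lift_def)
  also have "\<dots> = (\<Sum>v\<in>{v\<in>lk. col v = \<alpha>}. deg v * (norm (star_average \<phi> v))\<^sup>2)"
    by (simp add: sum.inter_filter[OF finite_link])
  also have "\<dots> \<le> (\<Sum>v\<in>{v\<in>lk. col v = \<alpha>}. \<Sum>\<sigma>\<in>{\<sigma>\<in>star. v \<in> \<sigma>}. (norm (\<phi> \<sigma>))\<^sup>2)"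
  proof (rule sum_mono)
    fix v assume v: "v \<in> {v\<in>lk. col v = \<alpha>}"
    define S where "S = {\<sigma>\<in>star. v \<in> \<sigma>}"
    have deg: "deg v = real (card S)" "deg v > 0"
      using v deg_eq_card_star link_vertex(1) deg_ge_1[of v] by (auto simp: S_def)
    have "norm (star_average \<phi> v) \<le> (\<Sum>\<sigma>\<in>S. norm (\<phi> \<sigma>)) / deg v"
      using deg(2) norm_sum[of \<phi> S] by (simp add: star_average_def S_def[symmetric] divide_le_eq)
    then have "deg v * (norm (star_average \<phi> v))\<^sup>2 \<le> deg v * ((\<Sum>\<sigma>\<in>S. norm (\<phi> \<sigma>)) / deg v)\<^sup>2"
      using deg(2) by (intro mult_left_mono power_mono) auto
    also have "\<dots> = (\<Sum>\<sigma>\<in>S. norm (\<phi> \<sigma>))\<^sup>2 / card S"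
      using deg by (simp add: power2_eq_square)
    also have "\<dots> \<le> (\<Sum>\<sigma>\<in>S. (norm (\<phi> \<sigma>))\<^sup>2)"
      using sum_squared_le_sum_of_squares[of "\<lambda>\<sigma>. norm (\<phi> \<sigma>)" S] deg by (simp add: divide_le_eq)
    finally show "deg v * (norm (star_average \<phi> v))\<^sup>2 \<le> (\<Sum>\<sigma>\<in>{\<sigma>\<in>star. v \<in> \<sigma>}. (norm (\<phi> \<sigma>))\<^sup>2)"
      unfolding S_def .
  qed
  also have "\<dots> = (\<Sum>\<sigma>\<in>star. (norm (\<phi> \<sigma>))\<^sup>2)" by (rule sum_star_by_colour) simp
  finally show ?thesis .
qed

theorem sum_norm_P_defect_star_le:
  fixes \<phi> :: "'a set \<Rightarrow> 'e::real_normed_vector"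
  shows "(\<Sum>\<sigma>\<in>star. (norm (P_defect n X col ({0..n} - {\<alpha>}) ({0..n} - {\<beta>}) \<phi> \<sigma>))\<^sup>2)
         \<le> (link_lambda TYPE('e) n X col \<tau>)\<^sup>2 * (\<Sum>\<sigma>\<in>star. (norm (\<phi> \<sigma>))\<^sup>2)"
proof -
  let ?lam = "link_lambda TYPE('e) n X col \<tau>"
  have \<lambda>: "?lam = bipartite_lambda TYPE('e) lk adj col deg" unfolding link_lambda_def ..
  have "wl2_norm lk deg (graph_A_perp lk adj col deg (link_lift \<phi>)) \<le> ?lam * wl2_norm lk deg (link_lift \<phi>)"
    unfolding \<lambda> by (rule wl2_norm_graph_A_perp_le[OF finite_link deg_ge_1])
  moreover have "0 \<le> wl2_norm lk deg (graph_A_perp lk adj col deg (link_lift \<phi>))"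
    using deg_ge_1 by (intro wl2_norm_nonneg) (auto intro: order.trans[OF zero_le_one])
  ultimately have "(wl2_norm lk deg (graph_A_perp lk adj col deg (link_lift \<phi>)))\<^sup>2
      \<le> ?lam\<^sup>2 * (wl2_norm lk deg (link_lift \<phi>))\<^sup>2"
    by (metis power_mono power_mult_distrib)
  also have "\<dots> \<le> ?lam\<^sup>2 * (\<Sum>\<sigma>\<in>star. (norm (\<phi> \<sigma>))\<^sup>2)"
    by (intro mult_left_mono wl2_norm_link_lift_le) simp
  finally show ?thesis using sum_norm_P_defect_le[of \<phi>] by linarith
qed

end

section \<open>Haar measure\<close>

lemma (in group) openin_left_translate:
  assumes "topological_group G T" "g \<in> carrier G" "openin T U"
  shows "openin T ((\<lambda>x. g \<otimes> x) ` U)"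
proof -
  have top: "topspace T = carrier G"
    and mult: "continuous_map (prod_topology T T) T (\<lambda>(x, y). x \<otimes> y)"
    using assms(1) unfolding topological_group_def by blast+
  have "continuous_map T (prod_topology T T) (\<lambda>x. (inv g, x))"
    using assms(2) top by (auto intro!: continuous_map_pairedI)
  from continuous_map_compose[OF this mult] have "continuous_map T T (\<lambda>x. inv g \<otimes> x)"
    by (simp add: o_def)
  from openin_continuous_map_preimage[OF this assms(3)]
  have "openin T {x \<in> topspace T. inv g \<otimes> x \<in> U}" .
  moreover have "(\<lambda>x. g \<otimes> x) ` U = {x \<in> topspace T. inv g \<otimes> x \<in> U}"
    using openin_subset[OF assms(3)] assms(2) top by (force simp: m_assoc[symmetric])
  ultimately show ?thesis by simp
qed

lemma haar_measure_openin_sets: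
  assumes "haar_measure G T \<mu>" "openin T U"
  shows "U \<in> sets \<mu>"
proof -
  have "sets \<mu> = sigma_sets (topspace T) (Collect (openin T))"
    using assms(1) unfolding haar_measure_def by (elim conjE)
  then show ?thesis using assms(2) by (simp add: sigma_sets.Basic)
qed

lemma haar_measure_left_invariant:
  assumes "haar_measure G T \<mu>" "g \<in> carrier G" "A \<in> sets \<mu>"
  shows "emeasure \<mu> ((\<lambda>x. g \<otimes>\<^bsub>G\<^esub> x) ` A) = emeasure \<mu> A"
proof -
  have "\<forall>g\<in>carrier G. \<forall>A\<in>sets \<mu>. emeasure \<mu> ((\<lambda>x. g \<otimes>\<^bsub>G\<^esub> x) ` A) = emeasure \<mu> A"
    using assms(1) unfolding haar_measure_def by (elim conjE)
  then show ?thesis using assms(2,3) by blast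
qed

lemma (in group) emeasure_conjugate_open:
  assumes "unimodular_haar G T \<mu>" "k \<in> carrier G" "openin T H"
  shows "emeasure \<mu> ((\<lambda>x. x \<otimes> inv k) ` (\<lambda>x. k \<otimes> x) ` H) = emeasure \<mu> H"
proof -
  have tg: "topological_group G T" and haar: "haar_measure G T \<mu>"
    and right: "\<forall>g\<in>carrier G. \<forall>A\<in>sets \<mu>. emeasure \<mu> ((\<lambda>x. x \<otimes> g) ` A) = emeasure \<mu> A"
    using assms(1) unfolding unimodular_haar_def lc_group_def by blast+
  have "openin T ((\<lambda>x. k \<otimes> x) ` H)" by (rule openin_left_translate[OF tg assms(2,3)])
  then have "emeasure \<mu> ((\<lambda>x. x \<otimes> inv k) ` (\<lambda>x. k \<otimes> x) ` H) = emeasure \<mu> ((\<lambda>x. k \<otimes> x) ` H)"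
    using right assms(2) haar_measure_openin_sets[OF haar] by simp
  also have "\<dots> = emeasure \<mu> H"
    using haar_measure_left_invariant[OF haar assms(2) haar_measure_openin_sets[OF haar assms(3)]] .
  finally show ?thesis .
qed

lemma (in group) emeasure_eq_card_fibres_mult:
  assumes tg: "topological_group G T" and haar: "haar_measure G T \<mu>"
    and H: "H \<subseteq> carrier G" and fin: "finite (f ` H)" and S: "openin T S"
    and fibre: "\<And>h. h \<in> H \<Longrightarrow> {h'\<in>H. f h' = f h} = (\<lambda>x. h \<otimes> x) ` S"
  shows "emeasure \<mu> H = of_nat (card (f ` H)) * emeasure \<mu> S"
proof -
  define C where "C y = {h\<in>H. f h = y}" for y
  have C: "C (f h) = (\<lambda>x. h \<otimes> x) ` S" "C (f h) \<in> sets \<mu>" "emeasure \<mu> (C (f h)) = emeasure \<mu> S"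
    if "h \<in> H" for h
  proof -
    show C: "C (f h) = (\<lambda>x. h \<otimes> x) ` S" using fibre[OF that] by (simp add: C_def)
    have "h \<in> carrier G" using that H by blast
    then show "C (f h) \<in> sets \<mu>" unfolding C
      by (intro haar_measure_openin_sets[OF haar] openin_left_translate[OF tg _ S])
    show "emeasure \<mu> (C (f h)) = emeasure \<mu> S" unfolding C
      using haar_measure_left_invariant[OF haar _ haar_measure_openin_sets[OF haar S]] H that by blast
  qed
  have "C ` f ` H \<subseteq> sets \<mu>" using C(2) by blast
  moreover have "disjoint_family_on C (f ` H)" unfolding disjoint_family_on_def C_def by blast
  ultimately have "(\<Sum>y\<in>f ` H. emeasure \<mu> (C y)) = emeasure \<mu> (\<Union>y\<in>f ` H. C y)"
    using fin by (rule sum_emeasure)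
  also have "(\<Union>y\<in>f ` H. C y) = H" unfolding C_def by blast
  finally have "emeasure \<mu> H = (\<Sum>y\<in>f ` H. emeasure \<mu> (C y))" ..
  also have "\<dots> = (\<Sum>y\<in>f ` H. emeasure \<mu> S)" using C(3) by (intro sum.cong) auto
  finally show ?thesis by simp
qed

section \<open>Group actions on the complex\<close>

locale complex_action = partite_complex n X col
  for n and X :: "'a set set" and col +
  fixes G :: "('g, 'b) monoid_scheme" (structure) and T :: "'g topology" and \<mu> :: "'g measure"
    and act :: "'g \<Rightarrow> 'a \<Rightarrow> 'a" and \<pi> :: "'g \<Rightarrow> ('e::banach \<Rightarrow>\<^sub>L 'e)" and D :: "nat \<Rightarrow> 'a set set"
  assumes n2: "n \<ge> 2"
    and links: "links_finite_connected n X"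
    and haar: "unimodular_haar G T \<mu>"
    and action: "type_preserving_action G X col act"
    and cocompact: "cocompact G X act"
    and stabs: "\<forall>\<tau>\<in>faces X (n - 2) \<union> faces X (n - 1) \<union> faces X n.
                  openin T (stab G act \<tau>) \<and> compactin T (stab G act \<tau>)"
    and rep: "strongly_continuous_rep G T \<pi>"
    and reps: "\<forall>k\<in>{n - 2, n - 1, n}. orbit_reps G act (faces X k) (D k)"
    and nested: "\<forall>k1\<in>{n - 2, n - 1, n}. \<forall>k2\<in>{n - 2, n - 1, n}. k1 < k2 \<longrightarrow>
                   (\<forall>\<tau>\<in>D k1. \<exists>\<sigma>\<in>D k2. \<tau> \<subseteq> \<sigma>)"
begin

lemma topological_group: "topological_group G T"
  using haar unfolding unimodular_haar_def lc_group_def by blast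

sublocale group G
  using topological_group unfolding topological_group_def by blast

lemma act_one: "v \<in> vertices X \<Longrightarrow> act \<one> v = v"
  and act_mult: "g \<in> carrier G \<Longrightarrow> h \<in> carrier G \<Longrightarrow> v \<in> vertices X \<Longrightarrow> act (g \<otimes> h) v = act g (act h v)"
  and act_simplex: "g \<in> carrier G \<Longrightarrow> \<sigma> \<in> X \<Longrightarrow> act g ` \<sigma> \<in> X"
  and col_act: "g \<in> carrier G \<Longrightarrow> v \<in> vertices X \<Longrightarrow> col (act g v) = col v"
  using action unfolding type_preserving_action_def by blast+

lemma act_vertex: "g \<in> carrier G \<Longrightarrow> v \<in> vertices X \<Longrightarrow> act g v \<in> vertices X"
  using act_simplex[of g "{v}"] by (simp add: vertices_def)

lemma act_image_mult:
  "g \<in> carrier G \<Longrightarrow> h \<in> carrier G \<Longrightarrow> \<rho> \<subseteq> vertices X \<Longrightarrow> act (g \<otimes> h) ` \<rho> = act g ` act h ` \<rho>"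
proof -
  assume gh: "g \<in> carrier G" "h \<in> carrier G" "\<rho> \<subseteq> vertices X"
  have "act (g \<otimes> h) ` \<rho> = (\<lambda>v. act g (act h v)) ` \<rho>"
    using gh act_mult by (intro image_cong[OF refl]) blast
  then show ?thesis by (simp add: image_image)
qed

lemma act_image_one: "\<rho> \<subseteq> vertices X \<Longrightarrow> act \<one> ` \<rho> = \<rho>"
proof -
  assume "\<rho> \<subseteq> vertices X"
  then have "act \<one> ` \<rho> = id ` \<rho>" using act_one by (intro image_cong[OF refl]) auto
  then show ?thesis by simp
qed

lemma act_image_inv: "g \<in> carrier G \<Longrightarrow> \<rho> \<subseteq> vertices X \<Longrightarrow> act (inv g) ` act g ` \<rho> = \<rho>"
  using act_image_mult[of "inv g" g \<rho>] act_image_one by simp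

lemma act_image_inv': "g \<in> carrier G \<Longrightarrow> \<rho> \<subseteq> vertices X \<Longrightarrow> act g ` act (inv g) ` \<rho> = \<rho>"
  using act_image_mult[of g "inv g" \<rho>] act_image_one by simp

lemma inj_on_act: "g \<in> carrier G \<Longrightarrow> inj_on (act g) (vertices X)"
proof (rule inj_onI)
  fix u v assume g: "g \<in> carrier G" and uv: "u \<in> vertices X" "v \<in> vertices X" "act g u = act g v"
  have "u = act (inv g) (act g u)" "v = act (inv g) (act g v)"
    using act_mult[of "inv g" g u] act_mult[of "inv g" g v] act_one g uv(1,2) by simp_all
  then show "u = v" using uv(3) by simp
qed

lemma card_act_image: "g \<in> carrier G \<Longrightarrow> \<rho> \<subseteq> vertices X \<Longrightarrow> card (act g ` \<rho>) = card \<rho>"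
  using inj_on_act by (blast intro: card_image inj_on_subset)

lemma act_faces: "g \<in> carrier G \<Longrightarrow> \<sigma> \<in> faces X k \<Longrightarrow> act g ` \<sigma> \<in> faces X k"
  unfolding faces_def using act_simplex card_act_image simplex_subset_vertices by auto

lemma col_act_image: "g \<in> carrier G \<Longrightarrow> \<rho> \<subseteq> vertices X \<Longrightarrow> col ` act g ` \<rho> = col ` \<rho>"
proof -
  assume "g \<in> carrier G" "\<rho> \<subseteq> vertices X"
  then have "(\<lambda>v. col (act g v)) ` \<rho> = col ` \<rho>" using col_act by (intro image_cong[OF refl]) auto
  then show ?thesis by (simp add: image_image)
qed

lemma act_typed_face:
  "g \<in> carrier G \<Longrightarrow> \<sigma> \<subseteq> vertices X \<Longrightarrow> act g ` typed_face col \<sigma> \<kappa> = typed_face col (act g ` \<sigma>) \<kappa>"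
  unfolding typed_face_def using col_act by auto

lemma mem_orbit_iff: "\<sigma>' \<in> orbit G act \<sigma> \<longleftrightarrow> (\<exists>g\<in>carrier G. \<sigma>' = act g ` \<sigma>)"
  unfolding orbit_def by blast

lemma orbit_sym:
  assumes "\<sigma> \<subseteq> vertices X" "\<sigma>' \<in> orbit G act \<sigma>"
  shows "\<sigma> \<in> orbit G act \<sigma>'"
proof -
  obtain g where "g \<in> carrier G" "\<sigma>' = act g ` \<sigma>" using assms(2) unfolding mem_orbit_iff by blast
  then show ?thesis unfolding mem_orbit_iff using act_image_inv[OF _ assms(1)] by (intro bexI[of _ "inv g"]) auto
qed

lemma orbit_trans:
  assumes "\<sigma> \<subseteq> vertices X" "\<sigma>' \<in> orbit G act \<sigma>" "\<sigma>'' \<in> orbit G act \<sigma>'"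
  shows "\<sigma>'' \<in> orbit G act \<sigma>"
proof -
  obtain g h where "g \<in> carrier G" "\<sigma>' = act g ` \<sigma>" "h \<in> carrier G" "\<sigma>'' = act h ` \<sigma>'"
    using assms(2,3) unfolding mem_orbit_iff by blast
  then show ?thesis unfolding mem_orbit_iff using act_image_mult[OF _ _ assms(1)]
    by (intro bexI[of _ "h \<otimes> g"]) auto
qed

lemma orbit_reps_D: "k \<in> {n - 2, n - 1, n} \<Longrightarrow> orbit_reps G act (faces X k) (D k)"
  using reps by blast

lemma reps_subset: "k \<in> {n - 2, n - 1, n} \<Longrightarrow> D k \<subseteq> faces X k"
  by (drule orbit_reps_D) (simp add: orbit_reps_def)

lemma reps_cover: "k \<in> {n - 2, n - 1, n} \<Longrightarrow> \<sigma> \<in> faces X k \<Longrightarrow> \<exists>\<tau>\<in>D k. \<sigma> \<in> orbit G act \<tau>"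
  by (drule orbit_reps_D) (simp add: orbit_reps_def)

lemma reps_unique:
  "k \<in> {n - 2, n - 1, n} \<Longrightarrow> \<tau> \<in> D k \<Longrightarrow> \<tau>' \<in> D k \<Longrightarrow> \<tau>' \<in> orbit G act \<tau> \<Longrightarrow> \<tau>' = \<tau>"
  by (drule orbit_reps_D) (simp add: orbit_reps_def)

lemma reps_chamber: "\<sigma> \<in> D n \<Longrightarrow> \<sigma> \<in> chambers"
  using reps_subset[of n] by auto

lemma reps_eq_if_common_orbit:
  assumes "k \<in> {n - 2, n - 1, n}" "\<tau> \<in> D k" "\<tau>' \<in> D k" "\<sigma> \<in> orbit G act \<tau>" "\<sigma> \<in> orbit G act \<tau>'"
  shows "\<tau> = \<tau>'"
proof -
  have "\<tau> \<in> X" "\<tau>' \<in> X" using assms(2,3) reps_subset[OF assms(1)] by (auto simp: faces_def)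
  then have "\<tau>' \<in> orbit G act \<tau>"
    using orbit_trans[OF _ assms(4) orbit_sym[OF _ assms(5)]] simplex_subset_vertices by blast
  then show ?thesis using reps_unique[OF assms(1,2,3)] by simp
qed

lemma finite_reps: "k \<in> {n - 2, n - 1, n} \<Longrightarrow> finite (D k)"
proof -
  assume k: "k \<in> {n - 2, n - 1, n}"
  have "inj_on (orbit G act) (D k)"
  proof (rule inj_onI)
    fix \<tau> \<tau>' assume \<tau>: "\<tau> \<in> D k" "\<tau>' \<in> D k" and eq: "orbit G act \<tau> = orbit G act \<tau>'"
    have "\<tau>' \<subseteq> vertices X" using \<tau> reps_subset[OF k] simplex_subset_vertices by (auto simp: faces_def)
    then have "\<tau>' \<in> orbit G act \<tau>'"
      unfolding mem_orbit_iff using act_image_one by (intro bexI[of _ \<one>]) auto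
    then show "\<tau> = \<tau>'" using reps_unique[OF k \<tau>] eq by simp
  qed
  moreover have "orbit G act ` D k \<subseteq> orbit G act ` X" using reps_subset[OF k] by (auto simp: faces_def)
  then have "finite (orbit G act ` D k)"
    using cocompact unfolding cocompact_def by (rule finite_subset)
  ultimately show ?thesis using finite_imageD by blast
qed

definition equivariant :: "('a set \<Rightarrow> 'e) \<Rightarrow> bool" where
  "equivariant \<psi> \<longleftrightarrow> (\<forall>g\<in>carrier G. \<forall>\<sigma>\<in>chambers. \<psi> (act g ` \<sigma>) = \<pi> g (\<psi> \<sigma>))"

lemma sim_nu_act: "g \<in> carrier G \<Longrightarrow> sim_nu X col \<kappa> \<sigma> \<sigma>' \<Longrightarrow> sim_nu X col \<kappa> (act g ` \<sigma>) (act g ` \<sigma>')"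
proof -
  assume g: "g \<in> carrier G" and "sim_nu X col \<kappa> \<sigma> \<sigma>'"
  then obtain \<rho> where \<rho>: "\<rho> \<in> X" "\<rho> \<subseteq> \<sigma> \<inter> \<sigma>'" "col ` \<rho> = \<kappa>"
    unfolding sim_nu_def stype_def by blast
  then have "act g ` \<rho> \<in> X" "act g ` \<rho> \<subseteq> act g ` \<sigma> \<inter> act g ` \<sigma>'" "col ` act g ` \<rho> = \<kappa>"
    using act_simplex[OF g] col_act_image[OF g simplex_subset_vertices] by auto
  then show ?thesis unfolding sim_nu_def stype_def by blast
qed

lemma P_op_equivariant:
  assumes eq: "equivariant \<psi>"
  shows "equivariant (P_op n X col \<kappa> \<psi>)"
  unfolding equivariant_def
proof (intro ballI)
  fix g \<sigma> assume g: "g \<in> carrier G" and \<sigma>: "\<sigma> \<in> chambers"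
  define S where "S = {\<sigma>'\<in>chambers. sim_nu X col \<kappa> \<sigma>' \<sigma>}"
  have vert: "\<sigma>' \<subseteq> vertices X" if "\<sigma>' \<in> chambers" for \<sigma>'
    using that simplex_subset_vertices chamber_simplex by blast
  have "{\<sigma>'\<in>chambers. sim_nu X col \<kappa> \<sigma>' (act g ` \<sigma>)} = (\<lambda>\<sigma>'. act g ` \<sigma>') ` S"
  proof
    show "(\<lambda>\<sigma>'. act g ` \<sigma>') ` S \<subseteq> {\<sigma>'\<in>chambers. sim_nu X col \<kappa> \<sigma>' (act g ` \<sigma>)}"
      unfolding S_def using act_faces[OF g] sim_nu_act[OF g] by auto
    show "{\<sigma>'\<in>chambers. sim_nu X col \<kappa> \<sigma>' (act g ` \<sigma>)} \<subseteq> (\<lambda>\<sigma>'. act g ` \<sigma>') ` S"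
    proof
      fix \<sigma>'' assume \<sigma>'': "\<sigma>'' \<in> {\<sigma>'\<in>chambers. sim_nu X col \<kappa> \<sigma>' (act g ` \<sigma>)}"
      then have "act (inv g) ` \<sigma>'' \<in> S"
        using act_faces[of "inv g"] sim_nu_act[of "inv g" \<kappa> \<sigma>'' "act g ` \<sigma>"] g act_image_inv[OF g vert[OF \<sigma>]]
        unfolding S_def by auto
      moreover have "\<sigma>'' = act g ` act (inv g) ` \<sigma>''" using act_image_inv'[OF g] \<sigma>'' vert by auto
      ultimately show "\<sigma>'' \<in> (\<lambda>\<sigma>'. act g ` \<sigma>') ` S" by blast
    qed
  qed
  moreover have "inj_on (\<lambda>\<sigma>'. act g ` \<sigma>') S"
  proof (rule inj_onI)
    fix \<sigma>1 \<sigma>2 assume "\<sigma>1 \<in> S" "\<sigma>2 \<in> S" "act g ` \<sigma>1 = act g ` \<sigma>2"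
    then show "\<sigma>1 = \<sigma>2" using act_image_inv[OF g vert] unfolding S_def by (metis mem_Collect_eq)
  qed
  ultimately have "P_op n X col \<kappa> \<psi> (act g ` \<sigma>) = (1 / real (card S)) *\<^sub>R (\<Sum>\<sigma>'\<in>S. \<psi> (act g ` \<sigma>'))"
    unfolding P_op_def Let_def using act_faces[OF g \<sigma>] by (simp add: card_image sum.reindex)
  also have "\<dots> = (1 / real (card S)) *\<^sub>R (\<Sum>\<sigma>'\<in>S. \<pi> g (\<psi> \<sigma>'))"
    using eq g unfolding equivariant_def S_def by simp
  also have "\<dots> = \<pi> g (P_op n X col \<kappa> \<psi> \<sigma>)"
    unfolding P_op_def Let_def S_def using \<sigma> by (simp add: blinfun.scaleR_right blinfun.sum_right)
  finally show "P_op n X col \<kappa> \<psi> (act g ` \<sigma>) = \<pi> g (P_op n X col \<kappa> \<psi> \<sigma>)" .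
qed

lemma P_defect_equivariant: "equivariant \<phi> \<Longrightarrow> equivariant (P_defect n X col \<nu> \<nu>' \<phi>)"
  using P_op_equivariant unfolding P_defect_def equivariant_def by (simp add: blinfun.diff_right)

abbreviation Stab :: "'a set \<Rightarrow> 'g set" where
  "Stab \<equiv> stab G act"

lemma Stab_subset_carrier: "Stab \<sigma> \<subseteq> carrier G"
  by (auto simp: stab_def)

lemma Stab_open: "\<sigma> \<in> faces X (n - 2) \<union> faces X (n - 1) \<union> chambers \<Longrightarrow> openin T (Stab \<sigma>)"
  and Stab_compact: "\<sigma> \<in> faces X (n - 2) \<union> faces X (n - 1) \<union> chambers \<Longrightarrow> compactin T (Stab \<sigma>)"
  using stabs by blast+

lemma measure_Stab:
  assumes "\<sigma> \<in> faces X (n - 2) \<union> faces X (n - 1) \<union> chambers"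
  shows emeasure_Stab_eq_measure: "emeasure \<mu> (Stab \<sigma>) = ennreal (measure \<mu> (Stab \<sigma>))"
    and measure_Stab_pos: "measure \<mu> (Stab \<sigma>) > 0"
proof -
  have haar_\<mu>: "haar_measure G T \<mu>" using haar unfolding unimodular_haar_def by blast
  have "\<sigma> \<in> X" using assms by (auto simp: faces_def)
  then have "\<one> \<in> Stab \<sigma>" using act_image_one[OF simplex_subset_vertices] by (simp add: stab_def)
  then have pos: "emeasure \<mu> (Stab \<sigma>) > 0"
    using haar_\<mu> Stab_open[OF assms] unfolding haar_measure_def by blast
  have fin: "emeasure \<mu> (Stab \<sigma>) < \<infinity>"
    using haar_\<mu> Stab_compact[OF assms] unfolding haar_measure_def by blast
  then show "emeasure \<mu> (Stab \<sigma>) = ennreal (measure \<mu> (Stab \<sigma>))"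
    by (simp add: emeasure_eq_ennreal_measure)
  then show "measure \<mu> (Stab \<sigma>) > 0" using pos by simp
qed

lemma Stab_act_image:
  assumes k: "k \<in> carrier G" and \<sigma>: "\<sigma> \<subseteq> vertices X"
  shows "Stab (act k ` \<sigma>) = (\<lambda>x. x \<otimes> inv k) ` (\<lambda>x. k \<otimes> x) ` Stab \<sigma>"
proof
  have k\<sigma>: "act k ` \<sigma> \<subseteq> vertices X" using \<sigma> act_vertex k by blast
  show "Stab (act k ` \<sigma>) \<subseteq> (\<lambda>x. x \<otimes> inv k) ` (\<lambda>x. k \<otimes> x) ` Stab \<sigma>"
  proof
    fix h assume "h \<in> Stab (act k ` \<sigma>)"
    then have h: "h \<in> carrier G" "act h ` act k ` \<sigma> = act k ` \<sigma>" by (auto simp: stab_def)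
    define x where "x = inv k \<otimes> h \<otimes> k"
    have "act x ` \<sigma> = act (inv k) ` act h ` act k ` \<sigma>"
      unfolding x_def using h k \<sigma> k\<sigma> by (simp add: act_image_mult act_vertex image_subset_iff)
    then have "x \<in> Stab \<sigma>" using h k act_image_inv[OF k \<sigma>] by (simp add: stab_def x_def)
    moreover have "h = k \<otimes> x \<otimes> inv k"
      using h k by (simp add: x_def m_assoc) (simp add: m_assoc[symmetric])
    ultimately show "h \<in> (\<lambda>x. x \<otimes> inv k) ` (\<lambda>x. k \<otimes> x) ` Stab \<sigma>" by blast
  qed
  show "(\<lambda>x. x \<otimes> inv k) ` (\<lambda>x. k \<otimes> x) ` Stab \<sigma> \<subseteq> Stab (act k ` \<sigma>)"
  proof
    fix h assume "h \<in> (\<lambda>x. x \<otimes> inv k) ` (\<lambda>x. k \<otimes> x) ` Stab \<sigma>"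
    then obtain x where x: "x \<in> carrier G" "act x ` \<sigma> = \<sigma>" and hx: "h = k \<otimes> x \<otimes> inv k"
      by (auto simp: stab_def)
    have "act h ` act k ` \<sigma> = act k ` act x ` act (inv k) ` act k ` \<sigma>"
      unfolding hx using k x \<sigma> k\<sigma> by (simp add: act_image_mult act_vertex image_subset_iff)
    also have "\<dots> = act k ` \<sigma>" using act_image_inv[OF k \<sigma>] x by simp
    finally show "h \<in> Stab (act k ` \<sigma>)" using hx k x by (simp add: stab_def)
  qed
qed

lemma emeasure_Stab_act_image:
  assumes "k \<in> carrier G" "\<sigma> \<in> chambers"
  shows "emeasure \<mu> (Stab (act k ` \<sigma>)) = emeasure \<mu> (Stab \<sigma>)"
  unfolding Stab_act_image[OF assms(1) simplex_subset_vertices[OF chamber_simplex[OF assms(2)]]]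
  using emeasure_conjugate_open[OF haar assms(1) Stab_open] assms(2) by blast

lemma Stab_chamber_subset_typed_face:
  assumes "\<sigma> \<in> chambers"
  shows "Stab \<sigma> \<subseteq> Stab (typed_face col \<sigma> \<kappa>)"
proof
  fix h assume "h \<in> Stab \<sigma>"
  then have h: "h \<in> carrier G" "act h ` \<sigma> = \<sigma>" by (auto simp: stab_def)
  then have "act h ` typed_face col \<sigma> \<kappa> = typed_face col \<sigma> \<kappa>"
    using act_typed_face[OF h(1) simplex_subset_vertices[OF chamber_simplex[OF assms]]] by simp
  then show "h \<in> Stab (typed_face col \<sigma> \<kappa>)" using h by (simp add: stab_def)
qed

lemma emeasure_Stab_typed_face:
  assumes \<sigma>: "\<sigma> \<in> chambers" and \<tau>: "typed_face col \<sigma> \<kappa> \<in> faces X (n - 2) \<union> faces X (n - 1) \<union> chambers"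
    and fin: "finite ((\<lambda>h. act h ` \<sigma>) ` Stab (typed_face col \<sigma> \<kappa>))"
  shows "emeasure \<mu> (Stab (typed_face col \<sigma> \<kappa>))
    = of_nat (card ((\<lambda>h. act h ` \<sigma>) ` Stab (typed_face col \<sigma> \<kappa>))) * emeasure \<mu> (Stab \<sigma>)"
proof (rule emeasure_eq_card_fibres_mult[OF topological_group _ Stab_subset_carrier fin])
  show "haar_measure G T \<mu>" using haar unfolding unimodular_haar_def by blast
  show "openin T (Stab \<sigma>)" using \<sigma> by (intro Stab_open) simp
  have \<sigma>v: "\<sigma> \<subseteq> vertices X" using simplex_subset_vertices[OF chamber_simplex[OF \<sigma>]] .
  fix h assume h: "h \<in> Stab (typed_face col \<sigma> \<kappa>)"
  then have hG: "h \<in> carrier G" by (simp add: stab_def)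
  show "{h'\<in>Stab (typed_face col \<sigma> \<kappa>). act h' ` \<sigma> = act h ` \<sigma>} = (\<lambda>x. h \<otimes> x) ` Stab \<sigma>"
  proof
    show "{h'\<in>Stab (typed_face col \<sigma> \<kappa>). act h' ` \<sigma> = act h ` \<sigma>} \<subseteq> (\<lambda>x. h \<otimes> x) ` Stab \<sigma>"
    proof
      fix h' assume "h' \<in> {h'\<in>Stab (typed_face col \<sigma> \<kappa>). act h' ` \<sigma> = act h ` \<sigma>}"
      then have h': "h' \<in> carrier G" "act h' ` \<sigma> = act h ` \<sigma>" by (auto simp: stab_def)
      have "act (inv h \<otimes> h') ` \<sigma> = \<sigma>"
        using h' hG \<sigma>v act_image_inv[OF hG \<sigma>v] by (simp add: act_image_mult)
      then have "inv h \<otimes> h' \<in> Stab \<sigma>" using h' hG by (simp add: stab_def)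
      moreover have "h' = h \<otimes> (inv h \<otimes> h')" using h' hG by (simp add: m_assoc[symmetric])
      ultimately show "h' \<in> (\<lambda>x. h \<otimes> x) ` Stab \<sigma>" by blast
    qed
    show "(\<lambda>x. h \<otimes> x) ` Stab \<sigma> \<subseteq> {h'\<in>Stab (typed_face col \<sigma> \<kappa>). act h' ` \<sigma> = act h ` \<sigma>}"
    proof
      fix h' assume "h' \<in> (\<lambda>x. h \<otimes> x) ` Stab \<sigma>"
      then obtain x where x: "x \<in> Stab \<sigma>" and h'x: "h' = h \<otimes> x" by blast
      have xG: "x \<in> carrier G" "act x ` \<sigma> = \<sigma>" using x by (auto simp: stab_def)
      have "x \<in> Stab (typed_face col \<sigma> \<kappa>)" using x Stab_chamber_subset_typed_face[OF \<sigma>] by blast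
      then have "act x ` typed_face col \<sigma> \<kappa> = typed_face col \<sigma> \<kappa>" by (simp add: stab_def)
      moreover have "act h ` typed_face col \<sigma> \<kappa> = typed_face col \<sigma> \<kappa>" using h by (simp add: stab_def)
      moreover have "typed_face col \<sigma> \<kappa> \<subseteq> vertices X" using typed_face_subset[of col \<sigma> \<kappa>] \<sigma>v by blast
      ultimately have "h \<otimes> x \<in> Stab (typed_face col \<sigma> \<kappa>)"
        using hG xG by (simp add: stab_def act_image_mult)
      moreover have "act (h \<otimes> x) ` \<sigma> = act h ` \<sigma>" using hG xG \<sigma>v by (simp add: act_image_mult)
      ultimately show "h' \<in> {h'\<in>Stab (typed_face col \<sigma> \<kappa>). act h' ` \<sigma> = act h ` \<sigma>}" using h'x by simp
    qed
  qed
qed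

abbreviation K :: "'g set" where
  "K \<equiv> K_set G act n (D n)"

lemma rep_mult: "g \<in> carrier G \<Longrightarrow> h \<in> carrier G \<Longrightarrow> \<pi> (g \<otimes> h) = \<pi> g o\<^sub>L \<pi> h"
  and rep_continuous: "continuous_map T euclidean (\<lambda>g. \<pi> g v)"
  using rep unfolding strongly_continuous_rep_def by blast+

lemma bdd_above_norm_transporter:
  assumes \<rho>: "\<rho> \<in> faces X (n - 2) \<union> faces X (n - 1) \<union> chambers"
  shows "bdd_above ((\<lambda>g. norm (\<pi> g v)) ` {g\<in>carrier G. act g ` \<rho> = \<rho>'})"
proof (cases "{g\<in>carrier G. act g ` \<rho> = \<rho>'} = {}")
  case False
  then obtain g0 where g0: "g0 \<in> carrier G" "act g0 ` \<rho> = \<rho>'" by blast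
  have "compactin euclidean ((\<lambda>x. \<pi> x v) ` Stab \<rho>)"
    by (rule image_compactin[OF Stab_compact[OF \<rho>] rep_continuous])
  then have "bounded ((\<lambda>x. \<pi> x v) ` Stab \<rho>)" by (simp add: compact_imp_bounded)
  then obtain B where B: "\<And>x. x \<in> Stab \<rho> \<Longrightarrow> norm (\<pi> x v) \<le> B" unfolding bounded_iff by blast
  have \<rho>v: "\<rho> \<subseteq> vertices X" using \<rho> simplex_subset_vertices by (auto simp: faces_def)
  have "norm (\<pi> g v) \<le> norm (\<pi> g0) * B" if g: "g \<in> carrier G" "act g ` \<rho> = \<rho>'" for g
  proof -
    have "act (inv g0 \<otimes> g) ` \<rho> = \<rho>" using g g0 act_image_inv[OF g0(1) \<rho>v] by (simp add: act_image_mult \<rho>v)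
    then have x: "inv g0 \<otimes> g \<in> Stab \<rho>" using g g0 by (simp add: stab_def)
    have "\<pi> g v = \<pi> g0 (\<pi> (inv g0 \<otimes> g) v)"
      using rep_mult[of g0 "inv g0 \<otimes> g"] g g0 by (simp add: m_assoc[symmetric])
    then have "norm (\<pi> g v) \<le> norm (\<pi> g0) * norm (\<pi> (inv g0 \<otimes> g) v)" by (simp add: norm_blinfun)
    also have "\<dots> \<le> norm (\<pi> g0) * B" using B[OF x] by (simp add: mult_left_mono)
    finally show ?thesis .
  qed
  then show ?thesis by (intro bdd_aboveI2[where M = "norm (\<pi> g0) * B"]) blast
qed (simp only: image_empty bdd_above_empty)

lemma K_subset_transporters:
  "K \<subseteq> (\<Union>(\<rho>, \<rho>')\<in>{(\<rho>, \<rho>'). \<rho> \<in> faces X (n - 2) \<and> \<rho> \<subseteq> \<Union>(D n) \<and> \<rho>' \<subseteq> \<Union>(D n)}.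
          {g\<in>carrier G. act g ` \<rho> = \<rho>'})"
proof
  fix g assume "g \<in> K"
  then obtain \<sigma> \<sigma>' where g: "g \<in> carrier G" and \<sigma>: "\<sigma> \<in> D n" "\<sigma>' \<in> D n"
    and card: "card (act g ` \<sigma> \<inter> \<sigma>') \<ge> n - 1" unfolding K_set_def by blast
  obtain \<rho>' where \<rho>': "\<rho>' \<subseteq> act g ` \<sigma> \<inter> \<sigma>'" "card \<rho>' = n - 1"
    using obtain_subset_with_card_n[OF card] by metis
  have \<sigma>F: "\<sigma> \<in> chambers" using \<sigma>(1) reps_subset by auto
  have \<sigma>v: "\<sigma> \<subseteq> vertices X" using simplex_subset_vertices[OF chamber_simplex[OF \<sigma>F]] .
  have \<rho>'v: "\<rho>' \<subseteq> vertices X" using \<rho>'(1) \<sigma>v act_vertex[OF g] by blast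
  define \<rho> where "\<rho> = act (inv g) ` \<rho>'"
  have "\<rho> \<subseteq> \<sigma>" using \<rho>'(1) act_image_inv[OF g \<sigma>v] unfolding \<rho>_def by blast
  moreover have "card \<rho> = n - 1" using card_act_image[of "inv g" \<rho>'] g \<rho>'v \<rho>'(2) by (simp add: \<rho>_def)
  moreover then have "\<rho> \<noteq> {}" using n2 by auto
  ultimately have "\<rho> \<in> faces X (n - 2)"
    using simplex_face[OF chamber_simplex[OF \<sigma>F]] n2 by (simp add: faces_def)
  moreover have "act g ` \<rho> = \<rho>'" unfolding \<rho>_def by (rule act_image_inv'[OF g \<rho>'v])
  ultimately show "g \<in> (\<Union>(\<rho>, \<rho>')\<in>{(\<rho>, \<rho>'). \<rho> \<in> faces X (n - 2) \<and> \<rho> \<subseteq> \<Union>(D n) \<and> \<rho>' \<subseteq> \<Union>(D n)}.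
          {g\<in>carrier G. act g ` \<rho> = \<rho>'})"
    using \<open>\<rho> \<subseteq> \<sigma>\<close> \<rho>'(1) \<sigma> g by blast
qed

lemma bdd_above_K: "bdd_above ((\<lambda>g. (norm (\<pi> g))\<^sup>2) ` K)"
proof -
  let ?P = "{(\<rho>, \<rho>'). \<rho> \<in> faces X (n - 2) \<and> \<rho> \<subseteq> \<Union>(D n) \<and> \<rho>' \<subseteq> \<Union>(D n)}"
  have "finite (\<Union>(D n))" using finite_reps[of n] reps_subset[of n] simplex_finite
    by (auto simp: faces_def)
  moreover have "?P \<subseteq> Pow (\<Union>(D n)) \<times> Pow (\<Union>(D n))" by auto
  ultimately have "finite ?P" by (simp add: finite_subset)
  then have "bdd_above ((\<lambda>g. norm (\<pi> g v)) ` K)" for v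
    using bdd_above_norm_transporter
    by (intro bdd_above_mono[OF _ image_mono[OF K_subset_transporters]]) (auto simp: image_UN)
  then obtain B where "\<And>g. g \<in> K \<Longrightarrow> norm (\<pi> g) \<le> B"
    using banach_steinhaus[of \<pi> K] by (auto simp: bdd_above_def)
  then have "\<And>g. g \<in> K \<Longrightarrow> (norm (\<pi> g))\<^sup>2 \<le> B\<^sup>2" by (simp add: power_mono)
  then show ?thesis by (intro bdd_aboveI2[where M = "B\<^sup>2"])
qed

lemma K_setI:
  assumes "g \<in> carrier G" "\<sigma> \<in> D n" "\<sigma>' \<in> D n" "\<rho> \<subseteq> act g ` \<sigma> \<inter> \<sigma>'" "card \<rho> \<ge> n - 1"
  shows "g \<in> K"
proof -
  have "finite \<sigma>'" using assms(3) reps_chamber chamber_simplex simplex_finite by blast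
  then have "card \<rho> \<le> card (act g ` \<sigma> \<inter> \<sigma>')" using assms(4) by (intro card_mono) auto
  then have "n - 1 \<le> card (act g ` \<sigma> \<inter> \<sigma>')" using assms(5) by linarith
  then show ?thesis unfolding K_set_def using assms(1-3) by blast
qed

lemma norm_le_SUP_K: "g \<in> K \<Longrightarrow> (norm (\<pi> g))\<^sup>2 \<le> (SUP g\<in>K. (norm (\<pi> g))\<^sup>2)"
  by (rule cSUP_upper[OF _ bdd_above_K])

lemma SUP_K_nonneg: "(SUP g\<in>K. (norm (\<pi> g))\<^sup>2) \<ge> 0"
proof -
  obtain \<sigma> where \<sigma>: "\<sigma> \<in> chambers" using chambers_nonempty by blast
  then obtain \<sigma>0 where \<sigma>0: "\<sigma>0 \<in> D n" "\<sigma> \<in> orbit G act \<sigma>0" using reps_cover[of n] by auto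
  then have "\<sigma>0 \<in> chambers" using reps_chamber by blast
  then have "\<sigma>0 \<subseteq> act \<one> ` \<sigma>0 \<inter> \<sigma>0" "n - 1 \<le> card \<sigma>0"
    using act_image_one[OF simplex_subset_vertices[OF chamber_simplex]] card_chamber by auto
  then have "\<one> \<in> K" using K_setI[OF one_closed \<sigma>0(1) \<sigma>0(1)] by blast
  then show ?thesis using norm_le_SUP_K[of \<one>] zero_le_power2[of "norm (\<pi> \<one>)"] by linarith
qed

abbreviation vol :: "'a set \<Rightarrow> real" where
  "vol \<sigma> \<equiv> measure \<mu> (Stab \<sigma>)"

lemma norm_sq_act_le:
  assumes "equivariant \<psi>" "\<sigma> \<in> chambers" "g \<in> K"
  shows "(norm (\<psi> (act g ` \<sigma>)))\<^sup>2 \<le> (SUP g\<in>K. (norm (\<pi> g))\<^sup>2) * (norm (\<psi> \<sigma>))\<^sup>2"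
proof -
  have "g \<in> carrier G" using assms(3) by (simp add: K_set_def)
  then have "\<psi> (act g ` \<sigma>) = \<pi> g (\<psi> \<sigma>)" using assms(1,2) by (simp add: equivariant_def)
  then have "norm (\<psi> (act g ` \<sigma>)) \<le> norm (\<pi> g) * norm (\<psi> \<sigma>)" by (simp add: norm_blinfun)
  then have "(norm (\<psi> (act g ` \<sigma>)))\<^sup>2 \<le> (norm (\<pi> g))\<^sup>2 * (norm (\<psi> \<sigma>))\<^sup>2"
    by (metis norm_ge_zero power_mono power_mult_distrib)
  also have "\<dots> \<le> (SUP g\<in>K. (norm (\<pi> g))\<^sup>2) * (norm (\<psi> \<sigma>))\<^sup>2"
    by (intro mult_right_mono norm_le_SUP_K assms(3)) simp
  finally show ?thesis .
qed

end

section \<open>Summing over orbits of chambers\<close>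

locale colour_pair = complex_action n X col G T \<mu> act \<pi> D
  for n and X :: "'a set set" and col and G :: "('g, 'b) monoid_scheme" (structure) and T \<mu> act
    and \<pi> :: "'g \<Rightarrow> ('e::banach \<Rightarrow>\<^sub>L 'e)" and D +
  fixes \<alpha> \<beta> :: nat
  assumes \<alpha>: "\<alpha> \<le> n" and \<beta>: "\<beta> \<le> n" and \<alpha>\<beta>: "\<alpha> \<noteq> \<beta>"
begin

abbreviation I :: "nat set" where
  "I \<equiv> {0..n} - {\<alpha>, \<beta>}"

definition reps_I :: "'a set set" where
  "reps_I = {\<tau>\<in>D (n - 2). col ` \<tau> = I}"

definition chambers_at :: "'a set \<Rightarrow> 'a set set" where
  "chambers_at \<tau> = {\<sigma>\<in>chambers. \<tau> \<subseteq> \<sigma>}"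

definition rep_face :: "'a set \<Rightarrow> 'a set" where
  "rep_face \<sigma> = (SOME \<tau>. \<tau> \<in> D (n - 2) \<and> typed_face col \<sigma> I \<in> orbit G act \<tau>)"

definition rep_chamber :: "'a set \<Rightarrow> 'a set" where
  "rep_chamber \<sigma> = (SOME \<sigma>0. \<sigma>0 \<in> D n \<and> \<sigma> \<in> orbit G act \<sigma>0)"

definition orbit_at :: "'a set \<Rightarrow> 'a set \<Rightarrow> 'a set set" where
  "orbit_at \<sigma> \<tau> = {\<sigma>'\<in>chambers_at \<tau>. \<sigma>' \<in> orbit G act \<sigma>}"

lemma card_I: "card I = n - 1"
proof -
  have "card I = card {0..n} - card {\<alpha>, \<beta>}" using \<alpha> \<beta> by (intro card_Diff_subset) auto
  then show ?thesis using \<alpha>\<beta> by simp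
qed

lemma typed_face_I: "\<sigma> \<in> chambers \<Longrightarrow> typed_face col \<sigma> I \<in> faces X (n - 2) \<and> col ` typed_face col \<sigma> I = I"
proof -
  assume \<sigma>: "\<sigma> \<in> chambers"
  have "card I \<noteq> 0" using card_I n2 by simp
  then have "I \<noteq> {}" by (metis card.empty)
  moreover have sub: "I \<subseteq> {0..n}" by blast
  ultimately have "typed_face col \<sigma> I \<in> X" using typed_face_simplex[OF \<sigma>, of I] by simp
  moreover have "card (typed_face col \<sigma> I) = n - 2 + 1"
    using card_typed_face[OF \<sigma> sub] card_I n2 by simp
  ultimately show ?thesis using col_image_typed_face[OF \<sigma> sub] unfolding faces_def by blast
qed

lemma reps_I_reps: "\<tau> \<in> reps_I \<Longrightarrow> \<tau> \<in> D (n - 2)"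
  and col_reps_I: "\<tau> \<in> reps_I \<Longrightarrow> col ` \<tau> = I"
  by (simp_all add: reps_I_def)

lemma reps_I_faces: "\<tau> \<in> reps_I \<Longrightarrow> \<tau> \<in> faces X (n - 2)"
  using reps_I_reps reps_subset by blast

lemma finite_reps_I: "finite reps_I"
  using finite_reps[of "n - 2"] by (simp add: reps_I_def)

lemma codim2_star_reps_I: "\<tau> \<in> reps_I \<Longrightarrow> codim2_star n X col \<tau> \<alpha> \<beta>"
  using n2 \<alpha> \<beta> \<alpha>\<beta> reps_I_faces col_reps_I links
  by unfold_locales (auto simp: links_finite_connected_def)

lemma chambers_at_eq_star: "\<tau> \<in> reps_I \<Longrightarrow> chambers_at \<tau> = codim2_star.star n X \<tau>"
  unfolding chambers_at_def codim2_star.star_def[OF codim2_star_reps_I] ..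

lemma finite_chambers_at: "\<tau> \<in> reps_I \<Longrightarrow> finite (chambers_at \<tau>)"
  using codim2_star.finite_star[OF codim2_star_reps_I] chambers_at_eq_star by simp

lemma typed_face_chambers_at: "\<tau> \<in> reps_I \<Longrightarrow> \<sigma> \<in> chambers_at \<tau> \<Longrightarrow> typed_face col \<sigma> I = \<tau>"
  using typed_face_unique[of \<sigma> \<tau>] col_reps_I by (auto simp: chambers_at_def)

lemma rep_face:
  assumes \<sigma>: "\<sigma> \<in> chambers"
  shows rep_face_reps_I: "rep_face \<sigma> \<in> reps_I"
    and typed_face_orbit_rep_face: "typed_face col \<sigma> I \<in> orbit G act (rep_face \<sigma>)"
proof -
  have k: "n - 2 \<in> {n - 2, n - 1, n}" by simp
  have "\<exists>\<tau>. \<tau> \<in> D (n - 2) \<and> typed_face col \<sigma> I \<in> orbit G act \<tau>"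
    using reps_cover[OF k] typed_face_I[OF \<sigma>] by blast
  then have r: "rep_face \<sigma> \<in> D (n - 2)" "typed_face col \<sigma> I \<in> orbit G act (rep_face \<sigma>)"
    unfolding rep_face_def by (metis (mono_tags, lifting) someI_ex)+
  then obtain g where g: "g \<in> carrier G" "typed_face col \<sigma> I = act g ` rep_face \<sigma>"
    unfolding mem_orbit_iff by blast
  have "rep_face \<sigma> \<subseteq> vertices X"
    using r(1) reps_subset[OF k] simplex_subset_vertices by (auto simp: faces_def)
  then have "col ` rep_face \<sigma> = col ` typed_face col \<sigma> I" using g col_act_image[OF g(1)] by simp
  then have "col ` rep_face \<sigma> = I" using typed_face_I[OF \<sigma>] by simp
  then show "rep_face \<sigma> \<in> reps_I" using r(1) by (simp add: reps_I_def)
  show "typed_face col \<sigma> I \<in> orbit G act (rep_face \<sigma>)" by (rule r(2))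
qed

lemma rep_face_unique:
  "\<sigma> \<in> chambers \<Longrightarrow> \<tau> \<in> reps_I \<Longrightarrow> typed_face col \<sigma> I \<in> orbit G act \<tau> \<Longrightarrow> rep_face \<sigma> = \<tau>"
  using reps_eq_if_common_orbit[of "n - 2" "rep_face \<sigma>" \<tau>] rep_face reps_I_reps by auto

lemma rep_chamber:
  assumes "\<sigma> \<in> chambers"
  shows rep_chamber_reps: "rep_chamber \<sigma> \<in> D n"
    and orbit_rep_chamber: "\<sigma> \<in> orbit G act (rep_chamber \<sigma>)"
proof -
  have "\<exists>\<sigma>0. \<sigma>0 \<in> D n \<and> \<sigma> \<in> orbit G act \<sigma>0" using reps_cover[of n \<sigma>] assms by auto
  then show "rep_chamber \<sigma> \<in> D n" "\<sigma> \<in> orbit G act (rep_chamber \<sigma>)"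
    unfolding rep_chamber_def by (metis (mono_tags, lifting) someI_ex)+
qed

lemma rep_chamber_unique: "\<sigma> \<in> chambers \<Longrightarrow> \<sigma>0 \<in> D n \<Longrightarrow> \<sigma> \<in> orbit G act \<sigma>0 \<Longrightarrow> rep_chamber \<sigma> = \<sigma>0"
  using reps_eq_if_common_orbit[of n "rep_chamber \<sigma>" \<sigma>0 \<sigma>] rep_chamber by auto

lemma translate_into_chambers_at_rep_face:
  assumes \<sigma>: "\<sigma> \<in> chambers"
  obtains g where "g \<in> carrier G" "act g ` \<sigma> \<in> chambers_at (rep_face \<sigma>)"
    "typed_face col (act g ` \<sigma>) I = rep_face \<sigma>"
proof -
  let ?\<tau> = "rep_face \<sigma>"
  obtain g0 where g0: "g0 \<in> carrier G" "typed_face col \<sigma> I = act g0 ` ?\<tau>"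
    using typed_face_orbit_rep_face[OF \<sigma>] unfolding mem_orbit_iff by blast
  have \<sigma>v: "\<sigma> \<subseteq> vertices X" by (rule simplex_subset_vertices[OF chamber_simplex[OF \<sigma>]])
  have \<tau>v: "?\<tau> \<subseteq> vertices X" using reps_I_faces[OF rep_face_reps_I[OF \<sigma>]] simplex_subset_vertices
    by (auto simp: faces_def)
  have "typed_face col (act (inv g0) ` \<sigma>) I = act (inv g0) ` typed_face col \<sigma> I"
    using act_typed_face[OF inv_closed[OF g0(1)] \<sigma>v] by simp
  also have "\<dots> = ?\<tau>" using g0 act_image_inv[OF g0(1) \<tau>v] by simp
  finally have face: "typed_face col (act (inv g0) ` \<sigma>) I = ?\<tau>" .
  moreover have "act (inv g0) ` \<sigma> \<in> chambers" using act_faces[OF inv_closed[OF g0(1)] \<sigma>] .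
  ultimately have "act (inv g0) ` \<sigma> \<in> chambers_at ?\<tau>"
    using typed_face_subset[of col "act (inv g0) ` \<sigma>" I] by (simp add: chambers_at_def)
  then show ?thesis using that[of "inv g0"] g0(1) face by simp
qed

lemma finite_orbit_at: "\<tau> \<in> reps_I \<Longrightarrow> finite (orbit_at \<sigma> \<tau>)"
  using finite_chambers_at by (simp add: orbit_at_def)

lemma orbit_at_nonempty: "\<sigma> \<in> chambers \<Longrightarrow> orbit_at \<sigma> (rep_face \<sigma>) \<noteq> {}"
  by (rule translate_into_chambers_at_rep_face) (auto simp: orbit_at_def mem_orbit_iff)

lemma orbit_at_eq_image_Stab:
  assumes \<sigma>: "\<sigma> \<in> chambers" and g: "g \<in> carrier G" "act g ` \<sigma> \<in> chambers_at (rep_face \<sigma>)"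
  shows "(\<lambda>h. act h ` act g ` \<sigma>) ` Stab (rep_face \<sigma>) = orbit_at \<sigma> (rep_face \<sigma>)"
proof
  let ?\<tau> = "rep_face \<sigma>" and ?e = "act g ` \<sigma>"
  have \<tau>: "?\<tau> \<in> reps_I" by (rule rep_face_reps_I[OF \<sigma>])
  have \<sigma>v: "\<sigma> \<subseteq> vertices X" by (rule simplex_subset_vertices[OF chamber_simplex[OF \<sigma>]])
  have e: "?e \<in> chambers" "?\<tau> \<subseteq> ?e" using g(2) by (auto simp: chambers_at_def)
  have ev: "?e \<subseteq> vertices X" by (rule simplex_subset_vertices[OF chamber_simplex[OF e(1)]])
  show "(\<lambda>h. act h ` ?e) ` Stab ?\<tau> \<subseteq> orbit_at \<sigma> ?\<tau>"
  proof
    fix e' assume "e' \<in> (\<lambda>h. act h ` ?e) ` Stab ?\<tau>"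
    then obtain h where h: "h \<in> carrier G" "act h ` ?\<tau> = ?\<tau>" "e' = act h ` ?e"
      by (auto simp: stab_def)
    have "e' \<in> chambers" using act_faces[OF h(1) e(1)] h(3) by simp
    moreover have "?\<tau> \<subseteq> e'" using e(2) h by blast
    moreover have "e' = act (h \<otimes> g) ` \<sigma>" using h g \<sigma>v by (simp add: act_image_mult)
    ultimately show "e' \<in> orbit_at \<sigma> ?\<tau>"
      using h(1) g(1) unfolding orbit_at_def chambers_at_def mem_orbit_iff by blast
  qed
  show "orbit_at \<sigma> ?\<tau> \<subseteq> (\<lambda>h. act h ` ?e) ` Stab ?\<tau>"
  proof
    fix e' assume "e' \<in> orbit_at \<sigma> ?\<tau>"
    then obtain k where e': "e' \<in> chambers_at ?\<tau>" "k \<in> carrier G" "e' = act k ` \<sigma>"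
      unfolding orbit_at_def mem_orbit_iff by blast
    define h where "h = k \<otimes> inv g"
    have hG: "h \<in> carrier G" using e'(2) g(1) by (simp add: h_def)
    have "act h ` ?e = act k ` act (inv g) ` ?e"
      using act_image_mult[OF e'(2) inv_closed[OF g(1)] ev] by (simp add: h_def)
    then have he: "act h ` ?e = e'" using act_image_inv[OF g(1) \<sigma>v] e'(3) by simp
    have "act h ` ?\<tau> = typed_face col (act h ` ?e) I"
      using act_typed_face[OF hG ev, of I] typed_face_chambers_at[OF \<tau> g(2)] by simp
    also have "\<dots> = ?\<tau>" using he typed_face_chambers_at[OF \<tau> e'(1)] by simp
    finally have "h \<in> Stab ?\<tau>" using hG by (simp add: stab_def)
    then show "e' \<in> (\<lambda>h. act h ` ?e) ` Stab ?\<tau>" using he by blast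
  qed
qed

lemma vol_rep_face:
  assumes \<sigma>: "\<sigma> \<in> chambers"
  shows "vol (rep_face \<sigma>) = real (card (orbit_at \<sigma> (rep_face \<sigma>))) * vol \<sigma>"
proof -
  let ?\<tau> = "rep_face \<sigma>"
  obtain g where g: "g \<in> carrier G" "act g ` \<sigma> \<in> chambers_at ?\<tau>" "typed_face col (act g ` \<sigma>) I = ?\<tau>"
    using translate_into_chambers_at_rep_face[OF \<sigma>] by blast
  have e: "act g ` \<sigma> \<in> chambers" using g(2) by (simp add: chambers_at_def)
  have \<tau>: "?\<tau> \<in> faces X (n - 2) \<union> faces X (n - 1) \<union> chambers"
    using reps_I_faces[OF rep_face_reps_I[OF \<sigma>]] by blast
  have "emeasure \<mu> (Stab ?\<tau>) = of_nat (card (orbit_at \<sigma> ?\<tau>)) * emeasure \<mu> (Stab (act g ` \<sigma>))"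
    using emeasure_Stab_typed_face[OF e, of I] \<tau> g(3) orbit_at_eq_image_Stab[OF \<sigma> g(1,2)]
      finite_orbit_at[OF rep_face_reps_I[OF \<sigma>]] by simp
  also have "\<dots> = of_nat (card (orbit_at \<sigma> ?\<tau>)) * emeasure \<mu> (Stab \<sigma>)"
    using emeasure_Stab_act_image[OF g(1) \<sigma>] by simp
  also have "\<dots> = ennreal (real (card (orbit_at \<sigma> ?\<tau>)) * vol \<sigma>)"
    using emeasure_Stab_eq_measure[of \<sigma>] \<sigma> by (simp add: ennreal_of_nat_eq_real_of_nat ennreal_mult)
  finally show ?thesis
    using emeasure_Stab_eq_measure[OF \<tau>] by (simp add: ennreal_inj)
qed

lemma orbit_at_in_K:
  assumes \<sigma>: "\<sigma> \<in> D n" and e: "e \<in> orbit_at \<sigma> (rep_face \<sigma>)"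
  obtains g where "g \<in> carrier G" "e = act g ` \<sigma>" "g \<in> K" "inv g \<in> K"
proof -
  let ?\<tau> = "rep_face \<sigma>"
  have \<sigma>F: "\<sigma> \<in> chambers" using \<sigma> by (rule reps_chamber)
  have \<sigma>v: "\<sigma> \<subseteq> vertices X" by (rule simplex_subset_vertices[OF chamber_simplex[OF \<sigma>F]])
  have \<tau>: "?\<tau> \<in> faces X (n - 2)" "?\<tau> \<in> D (n - 2)"
    using reps_I_faces reps_I_reps rep_face_reps_I[OF \<sigma>F] by auto
  then have \<tau>v: "?\<tau> \<subseteq> vertices X" and card\<tau>: "card ?\<tau> = n - 1"
    using simplex_subset_vertices n2 by (auto simp: faces_def)
  obtain \<sigma>0 where \<sigma>0: "\<sigma>0 \<in> D n" "?\<tau> \<subseteq> \<sigma>0" using nested \<tau>(2) n2 by fastforce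
  obtain g where g: "g \<in> carrier G" "e = act g ` \<sigma>" "?\<tau> \<subseteq> e"
    using e unfolding orbit_at_def chambers_at_def mem_orbit_iff by blast
  have "g \<in> K" using K_setI[OF g(1) \<sigma> \<sigma>0(1), of ?\<tau>] g \<sigma>0 card\<tau> by auto
  moreover have "act (inv g) ` ?\<tau> \<subseteq> act (inv g) ` \<sigma>0 \<inter> \<sigma>"
    using g \<sigma>0(2) act_image_inv[OF g(1) \<sigma>v] by blast
  then have "inv g \<in> K"
    using K_setI[OF inv_closed[OF g(1)] \<sigma>0(1) \<sigma>] card_act_image[OF inv_closed[OF g(1)] \<tau>v] card\<tau> by simp
  ultimately show ?thesis using that g by blast
qed

lemma rep_face_rep_chamber:
  assumes \<tau>: "\<tau> \<in> reps_I" and e: "e \<in> chambers_at \<tau>"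
  shows "rep_face (rep_chamber e) = \<tau>"
proof -
  have eF: "e \<in> chambers" using e by (simp add: chambers_at_def)
  let ?\<sigma> = "rep_chamber e"
  have \<sigma>F: "?\<sigma> \<in> chambers" using rep_chamber_reps[OF eF] by (rule reps_chamber)
  obtain g where g: "g \<in> carrier G" "e = act g ` ?\<sigma>" using orbit_rep_chamber[OF eF] unfolding mem_orbit_iff by blast
  have "typed_face col ?\<sigma> I = act (inv g) ` typed_face col e I"
    using act_typed_face[OF inv_closed[OF g(1)] simplex_subset_vertices[OF chamber_simplex[OF eF]], of I]
      g act_image_inv[OF g(1) simplex_subset_vertices[OF chamber_simplex[OF \<sigma>F]]] by simp
  also have "\<dots> = act (inv g) ` \<tau>" using typed_face_chambers_at[OF \<tau> e] by simp
  finally have "typed_face col ?\<sigma> I \<in> orbit G act \<tau>" unfolding mem_orbit_iff using g(1) by blast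
  then show ?thesis using rep_face_unique[OF \<sigma>F \<tau>] by simp
qed

lemma sum_reps_regroup: "(\<Sum>\<sigma>\<in>D n. h \<sigma>) = (\<Sum>\<tau>\<in>reps_I. \<Sum>\<sigma>\<in>{\<sigma>\<in>D n. rep_face \<sigma> = \<tau>}. h \<sigma>)"
proof -
  have "rep_face ` D n \<subseteq> reps_I" using rep_face_reps_I reps_chamber by blast
  then show ?thesis using sum.group[OF finite_reps[of n] finite_reps_I, of rep_face h] by simp
qed

lemma sum_chambers_at_regroup:
  assumes \<tau>: "\<tau> \<in> reps_I"
  shows "(\<Sum>e\<in>chambers_at \<tau>. f e) = (\<Sum>\<sigma>\<in>{\<sigma>\<in>D n. rep_face \<sigma> = \<tau>}. \<Sum>e\<in>orbit_at \<sigma> \<tau>. f e)"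
proof -
  have eF: "e \<in> chambers" if "e \<in> chambers_at \<tau>" for e using that by (simp add: chambers_at_def)
  have "rep_chamber ` chambers_at \<tau> \<subseteq> {\<sigma>\<in>D n. rep_face \<sigma> = \<tau>}"
    using rep_chamber_reps rep_face_rep_chamber[OF \<tau>] eF by blast
  then have "(\<Sum>e\<in>chambers_at \<tau>. f e)
      = (\<Sum>\<sigma>\<in>{\<sigma>\<in>D n. rep_face \<sigma> = \<tau>}. \<Sum>e\<in>{e\<in>chambers_at \<tau>. rep_chamber e = \<sigma>}. f e)"
    using sum.group[OF finite_chambers_at[OF \<tau>], of _ rep_chamber f] finite_reps[of n] by simp
  also have "\<dots> = (\<Sum>\<sigma>\<in>{\<sigma>\<in>D n. rep_face \<sigma> = \<tau>}. \<Sum>e\<in>orbit_at \<sigma> \<tau>. f e)"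
  proof (rule sum.cong[OF refl])
    fix \<sigma> assume "\<sigma> \<in> {\<sigma>\<in>D n. rep_face \<sigma> = \<tau>}"
    then have "{e\<in>chambers_at \<tau>. rep_chamber e = \<sigma>} = orbit_at \<sigma> \<tau>"
      unfolding orbit_at_def using rep_chamber rep_chamber_unique eF by blast
    then show "(\<Sum>e\<in>{e\<in>chambers_at \<tau>. rep_chamber e = \<sigma>}. f e) = (\<Sum>e\<in>orbit_at \<sigma> \<tau>. f e)" by simp
  qed
  finally show ?thesis .
qed

lemma vol_pos: "\<sigma> \<in> D n \<Longrightarrow> vol \<sigma> > 0" and vol_reps_I_pos: "\<tau> \<in> reps_I \<Longrightarrow> vol \<tau> > 0"
  using measure_Stab_pos reps_chamber reps_I_faces by blast+

lemma card_orbit_at_pos: "\<sigma> \<in> D n \<Longrightarrow> card (orbit_at \<sigma> (rep_face \<sigma>)) > 0"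
  using orbit_at_nonempty finite_orbit_at rep_face_reps_I reps_chamber
  by (auto simp: card_gt_0_iff)

lemma norm_sq_div_vol_le_orbit_at:
  assumes \<psi>: "equivariant \<psi>" and \<sigma>: "\<sigma> \<in> D n"
  shows "(norm (\<psi> \<sigma>))\<^sup>2 / vol \<sigma>
    \<le> (SUP g\<in>K. (norm (\<pi> g))\<^sup>2) * (\<Sum>e\<in>orbit_at \<sigma> (rep_face \<sigma>). (norm (\<psi> e))\<^sup>2) / vol (rep_face \<sigma>)"
proof -
  let ?O = "orbit_at \<sigma> (rep_face \<sigma>)" and ?S = "SUP g\<in>K. (norm (\<pi> g))\<^sup>2"
  have \<sigma>F: "\<sigma> \<in> chambers" using \<sigma> by (rule reps_chamber)
  have "(norm (\<psi> \<sigma>))\<^sup>2 \<le> ?S * (norm (\<psi> e))\<^sup>2" if e: "e \<in> ?O" for e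
  proof -
    obtain g where g: "g \<in> carrier G" "e = act g ` \<sigma>" "inv g \<in> K"
      using orbit_at_in_K[OF \<sigma> e] by blast
    have "e \<in> chambers" using e by (simp add: orbit_at_def chambers_at_def)
    moreover have "\<sigma> = act (inv g) ` e"
      using g act_image_inv[OF g(1) simplex_subset_vertices[OF chamber_simplex[OF \<sigma>F]]] by simp
    ultimately show ?thesis using norm_sq_act_le[OF \<psi> _ g(3)] by simp
  qed
  then have "real (card ?O) * (norm (\<psi> \<sigma>))\<^sup>2 \<le> ?S * (\<Sum>e\<in>?O. (norm (\<psi> e))\<^sup>2)"
    using sum_mono[of ?O "\<lambda>_. (norm (\<psi> \<sigma>))\<^sup>2"] by (simp add: sum_distrib_left)
  then show ?thesis
    using vol_rep_face[OF \<sigma>F] vol_pos[OF \<sigma>] card_orbit_at_pos[OF \<sigma>]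
    by (simp add: field_simps)
qed

lemma sum_orbit_at_div_vol_le:
  assumes \<psi>: "equivariant \<psi>" and \<sigma>: "\<sigma> \<in> D n"
  shows "(\<Sum>e\<in>orbit_at \<sigma> (rep_face \<sigma>). (norm (\<psi> e))\<^sup>2) / vol (rep_face \<sigma>)
    \<le> (SUP g\<in>K. (norm (\<pi> g))\<^sup>2) * ((norm (\<psi> \<sigma>))\<^sup>2 / vol \<sigma>)"
proof -
  let ?O = "orbit_at \<sigma> (rep_face \<sigma>)" and ?S = "SUP g\<in>K. (norm (\<pi> g))\<^sup>2"
  have \<sigma>F: "\<sigma> \<in> chambers" using \<sigma> by (rule reps_chamber)
  have "(norm (\<psi> e))\<^sup>2 \<le> ?S * (norm (\<psi> \<sigma>))\<^sup>2" if e: "e \<in> ?O" for e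
  proof -
    obtain g where g: "g \<in> carrier G" "e = act g ` \<sigma>" "g \<in> K" using orbit_at_in_K[OF \<sigma> e] by blast
    then show ?thesis using norm_sq_act_le[OF \<psi> \<sigma>F g(3)] by simp
  qed
  then have "(\<Sum>e\<in>?O. (norm (\<psi> e))\<^sup>2) \<le> real (card ?O) * (?S * (norm (\<psi> \<sigma>))\<^sup>2)"
    using sum_mono[of ?O "\<lambda>e. (norm (\<psi> e))\<^sup>2" "\<lambda>_. ?S * (norm (\<psi> \<sigma>))\<^sup>2"] by simp
  then show ?thesis
    using vol_rep_face[OF \<sigma>F] vol_pos[OF \<sigma>] card_orbit_at_pos[OF \<sigma>]
    by (simp add: field_simps)
qed

lemma link_lambda_reps_I:
  assumes "\<tau> \<in> reps_I"
  shows "0 \<le> link_lambda TYPE('e) n X col \<tau>"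
    and "link_lambda TYPE('e) n X col \<tau> \<le> Max (link_lambda TYPE('e) n X col ` reps_I)"
proof -
  interpret star: codim2_star n X col \<tau> \<alpha> \<beta> by (rule codim2_star_reps_I[OF assms])
  show "0 \<le> link_lambda TYPE('e) n X col \<tau>"
    unfolding link_lambda_def by (rule bipartite_lambda_nonneg[OF star.finite_link star.deg_ge_1])
  show "link_lambda TYPE('e) n X col \<tau> \<le> Max (link_lambda TYPE('e) n X col ` reps_I)"
    using assms finite_reps_I by simp
qed

lemma Max_link_lambda_nonneg: "0 \<le> Max (link_lambda TYPE('e) n X col ` reps_I)"
proof -
  obtain \<sigma> where "\<sigma> \<in> D n" using chambers_nonempty reps_cover[of n] by fastforce
  then have "rep_face \<sigma> \<in> reps_I" using rep_face_reps_I reps_chamber by blast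
  then show ?thesis using link_lambda_reps_I by (meson order.trans)
qed

lemma sum_fibre_P_defect_le:
  assumes \<phi>: "equivariant \<phi>" and \<tau>: "\<tau> \<in> reps_I"
  defines "S \<equiv> SUP g\<in>K. (norm (\<pi> g))\<^sup>2" and "\<Lambda> \<equiv> Max (link_lambda TYPE('e) n X col ` reps_I)"
    and "fibre \<equiv> {\<sigma>\<in>D n. rep_face \<sigma> = \<tau>}"
  shows "(\<Sum>\<sigma>\<in>fibre. (norm (P_defect n X col ({0..n} - {\<alpha>}) ({0..n} - {\<beta>}) \<phi> \<sigma>))\<^sup>2 / vol \<sigma>)
    \<le> S\<^sup>2 * \<Lambda>\<^sup>2 * (\<Sum>\<sigma>\<in>fibre. (norm (\<phi> \<sigma>))\<^sup>2 / vol \<sigma>)"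
proof -
  interpret star: codim2_star n X col \<tau> \<alpha> \<beta> by (rule codim2_star_reps_I[OF \<tau>])
  let ?\<psi> = "P_defect n X col ({0..n} - {\<alpha>}) ({0..n} - {\<beta>}) \<phi>"
  have S: "S \<ge> 0" unfolding S_def by (rule SUP_K_nonneg)
  have vol\<tau>: "vol \<tau> > 0" by (rule vol_reps_I_pos[OF \<tau>])
  have "(\<Sum>\<sigma>\<in>fibre. (norm (?\<psi> \<sigma>))\<^sup>2 / vol \<sigma>)
      \<le> (\<Sum>\<sigma>\<in>fibre. S * (\<Sum>e\<in>orbit_at \<sigma> \<tau>. (norm (?\<psi> e))\<^sup>2) / vol \<tau>)"
    using norm_sq_div_vol_le_orbit_at[OF P_defect_equivariant[OF \<phi>]]
    by (intro sum_mono) (auto simp: fibre_def S_def)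
  also have "\<dots> = S * (\<Sum>e\<in>chambers_at \<tau>. (norm (?\<psi> e))\<^sup>2) / vol \<tau>"
    unfolding sum_chambers_at_regroup[OF \<tau>] fibre_def
    by (simp add: sum_distrib_left sum_divide_distrib)
  also have "\<dots> \<le> S * (\<Lambda>\<^sup>2 * (\<Sum>e\<in>chambers_at \<tau>. (norm (\<phi> e))\<^sup>2)) / vol \<tau>"
  proof -
    have "(\<Sum>e\<in>chambers_at \<tau>. (norm (?\<psi> e))\<^sup>2)
        \<le> (link_lambda TYPE('e) n X col \<tau>)\<^sup>2 * (\<Sum>e\<in>chambers_at \<tau>. (norm (\<phi> e))\<^sup>2)"
      unfolding chambers_at_eq_star[OF \<tau>] using star.sum_norm_P_defect_star_le[of \<phi>] by simp
    also have "\<dots> \<le> \<Lambda>\<^sup>2 * (\<Sum>e\<in>chambers_at \<tau>. (norm (\<phi> e))\<^sup>2)"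
      using link_lambda_reps_I[OF \<tau>] unfolding \<Lambda>_def
      by (intro mult_right_mono power_mono sum_nonneg) auto
    finally show ?thesis using S vol\<tau> by (intro divide_right_mono mult_left_mono) auto
  qed
  also have "\<dots> = S * \<Lambda>\<^sup>2 * ((\<Sum>\<sigma>\<in>fibre. \<Sum>e\<in>orbit_at \<sigma> \<tau>. (norm (\<phi> e))\<^sup>2) / vol \<tau>)"
    unfolding sum_chambers_at_regroup[OF \<tau>] fibre_def by simp
  also have "\<dots> = S * \<Lambda>\<^sup>2 * (\<Sum>\<sigma>\<in>fibre. (\<Sum>e\<in>orbit_at \<sigma> \<tau>. (norm (\<phi> e))\<^sup>2) / vol \<tau>)"
    by (simp only: sum_divide_distrib)
  also have "\<dots> \<le> S * \<Lambda>\<^sup>2 * (\<Sum>\<sigma>\<in>fibre. S * ((norm (\<phi> \<sigma>))\<^sup>2 / vol \<sigma>))"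
    using sum_orbit_at_div_vol_le[OF \<phi>] S
    by (intro mult_left_mono sum_mono) (auto simp: fibre_def S_def)
  also have "\<dots> = S\<^sup>2 * \<Lambda>\<^sup>2 * (\<Sum>\<sigma>\<in>fibre. (norm (\<phi> \<sigma>))\<^sup>2 / vol \<sigma>)"
    by (simp add: sum_distrib_left power2_eq_square mult_ac)
  finally show ?thesis .
qed

lemma C_norm_P_defect_le:
  assumes "\<phi> \<in> C_space G act n X \<pi>"
  shows "C_norm G act \<mu> (D n) (P_defect n X col ({0..n} - {\<alpha>}) ({0..n} - {\<beta>}) \<phi>)
    \<le> (SUP g\<in>K. (norm (\<pi> g))\<^sup>2) * Max (link_lambda TYPE('e) n X col ` reps_I) * C_norm G act \<mu> (D n) \<phi>"
proof -
  let ?S = "SUP g\<in>K. (norm (\<pi> g))\<^sup>2" and ?\<Lambda> = "Max (link_lambda TYPE('e) n X col ` reps_I)"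
  have \<phi>: "equivariant \<phi>" using assms by (simp add: C_space_def equivariant_def)
  have "(\<Sum>\<sigma>\<in>D n. (norm (P_defect n X col ({0..n} - {\<alpha>}) ({0..n} - {\<beta>}) \<phi> \<sigma>))\<^sup>2 / vol \<sigma>)
      \<le> (\<Sum>\<tau>\<in>reps_I. ?S\<^sup>2 * ?\<Lambda>\<^sup>2 * (\<Sum>\<sigma>\<in>{\<sigma>\<in>D n. rep_face \<sigma> = \<tau>}. (norm (\<phi> \<sigma>))\<^sup>2 / vol \<sigma>))"
    unfolding sum_reps_regroup[where h = "\<lambda>\<sigma>. (norm (P_defect _ _ _ _ _ \<phi> \<sigma>))\<^sup>2 / vol \<sigma>"]
    by (intro sum_mono sum_fibre_P_defect_le[OF \<phi>])
  also have "\<dots> = (?S * ?\<Lambda>)\<^sup>2 * (\<Sum>\<sigma>\<in>D n. (norm (\<phi> \<sigma>))\<^sup>2 / vol \<sigma>)"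
    by (simp add: sum_reps_regroup[symmetric] sum_distrib_left power_mult_distrib)
  finally have "sqrt (\<Sum>\<sigma>\<in>D n. (norm (P_defect n X col ({0..n} - {\<alpha>}) ({0..n} - {\<beta>}) \<phi> \<sigma>))\<^sup>2 / vol \<sigma>)
      \<le> sqrt ((?S * ?\<Lambda>)\<^sup>2 * (\<Sum>\<sigma>\<in>D n. (norm (\<phi> \<sigma>))\<^sup>2 / vol \<sigma>))"
    by (rule real_sqrt_le_mono)
  also have "\<dots> = ?S * ?\<Lambda> * sqrt (\<Sum>\<sigma>\<in>D n. (norm (\<phi> \<sigma>))\<^sup>2 / vol \<sigma>)"
    using SUP_K_nonneg Max_link_lambda_nonneg by (simp add: real_sqrt_mult)
  finally show ?thesis unfolding C_norm_def .
qed

lemma op_norm_P_defect_le: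
  "op_norm_on (C_space G act n X \<pi>) (C_norm G act \<mu> (D n)) (P_defect n X col ({0..n} - {\<alpha>}) ({0..n} - {\<beta>}))
    \<le> (SUP g\<in>K. (norm (\<pi> g))\<^sup>2) * Max (link_lambda TYPE('e) n X col ` reps_I)"
proof (rule op_norm_on_le)
  show "(\<lambda>_. 0) \<in> C_space G act n X \<pi>" "C_norm G act \<mu> (D n) (\<lambda>_. 0) \<le> 1"
    by (simp_all add: C_space_def C_norm_def)
  show "0 \<le> (SUP g\<in>K. (norm (\<pi> g))\<^sup>2) * Max (link_lambda TYPE('e) n X col ` reps_I)"
    using SUP_K_nonneg Max_link_lambda_nonneg by simp
qed (rule C_norm_P_defect_le)

end

lemma missing_colour:
  assumes "\<nu> \<subseteq> {0..n}" "card \<nu> = n"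
  obtains a where "a \<le> n" "\<nu> = {0..n} - {a}"
proof -
  have "card ({0..n} - \<nu>) = 1" using assms by (simp add: card_Diff_subset finite_subset)
  then obtain a where a: "{0..n} - \<nu> = {a}" by (rule card_1_singletonE)
  then have "a \<le> n" "\<nu> = {0..n} - {a}" using assms(1) by auto
  then show ?thesis by (rule that)
qed

theorem lemma3p8:
  fixes n :: nat
    and X :: "'v set set" and col :: "'v \<Rightarrow> nat"
    and G :: "('g, 'b) monoid_scheme" and T :: "'g topology" and \<mu> :: "'g measure"
    and act :: "'g \<Rightarrow> 'v \<Rightarrow> 'v"
    and \<pi> :: "'g \<Rightarrow> ('e::banach \<Rightarrow>\<^sub>L 'e)"
    and D :: "nat \<Rightarrow> 'v set set"
    and \<nu> \<nu>' :: "nat set"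
  assumes n2: "n \<ge> 2"
    and cplx: "pure_partite_complex n X col"
    and gal: "gallery_connected n X"
    and links: "links_finite_connected n X"
    and grp: "unimodular_haar G T \<mu>"
    and act: "type_preserving_action G X col act"
    and cocpt: "cocompact G X act"
    and stabs: "\<forall>\<tau>\<in>faces X (n - 2) \<union> faces X (n - 1) \<union> faces X n.
                  openin T (stab G act \<tau>) \<and> compactin T (stab G act \<tau>)"
    and rep: "strongly_continuous_rep G T \<pi>"
    and reps: "\<forall>k\<in>{n - 2, n - 1, n}. orbit_reps G act (faces X k) (D k)"
    and nested: "\<forall>k1\<in>{n - 2, n - 1, n}. \<forall>k2\<in>{n - 2, n - 1, n}. k1 < k2 \<longrightarrow>
                   (\<forall>\<tau>\<in>D k1. \<exists>\<sigma>\<in>D k2. \<tau> \<subseteq> \<sigma>)"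
    and nu: "\<nu> \<subseteq> {0..n}" "\<nu>' \<subseteq> {0..n}" "card \<nu> = n" "card \<nu>' = n" "\<nu> \<noteq> \<nu>'"
  shows "max (op_norm_on (C_space G act n X \<pi>) (C_norm G act \<mu> (D n))
                 (\<lambda>\<phi>. (\<lambda>\<sigma>. P_op n X col \<nu> (P_op n X col \<nu>' \<phi>) \<sigma> - P_op n X col (\<nu> \<inter> \<nu>') \<phi> \<sigma>)))
             (op_norm_on (C_space G act n X \<pi>) (C_norm G act \<mu> (D n))
                 (\<lambda>\<phi>. (\<lambda>\<sigma>. P_op n X col \<nu>' (P_op n X col \<nu> \<phi>) \<sigma> - P_op n X col (\<nu> \<inter> \<nu>') \<phi> \<sigma>)))
         \<le> (SUP g\<in>K_set G act n (D n). (norm (\<pi> g))\<^sup>2)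
            * Max (link_lambda TYPE('e) n X col ` {\<tau>\<in>D (n - 2). stype col \<tau> = \<nu> \<inter> \<nu>'})"
proof -
  obtain \<alpha> where \<alpha>: "\<alpha> \<le> n" "\<nu> = {0..n} - {\<alpha>}" using missing_colour[OF nu(1,3)] .
  obtain \<beta> where \<beta>: "\<beta> \<le> n" "\<nu>' = {0..n} - {\<beta>}" using missing_colour[OF nu(2,4)] .
  have \<alpha>\<beta>: "\<alpha> \<noteq> \<beta>" using \<alpha> \<beta> nu(5) by blast
  interpret partite_complex n X col by unfold_locales (rule cplx)
  interpret complex_action n X col G T \<mu> act \<pi> D
    using n2 links grp act cocpt stabs rep reps nested by unfold_locales
  interpret p1: colour_pair n X col G T \<mu> act \<pi> D \<alpha> \<beta> using \<alpha> \<beta> \<alpha>\<beta> by unfold_locales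
  interpret p2: colour_pair n X col G T \<mu> act \<pi> D \<beta> \<alpha> using \<alpha> \<beta> \<alpha>\<beta> by unfold_locales auto
  have reps_I: "{\<tau>\<in>D (n - 2). stype col \<tau> = \<nu> \<inter> \<nu>'} = p1.reps_I" "p2.reps_I = p1.reps_I"
    unfolding p1.reps_I_def p2.reps_I_def stype_def \<alpha> \<beta> by auto
  have defects: "(\<lambda>\<phi> \<sigma>. P_op n X col \<nu> (P_op n X col \<nu>' \<phi>) \<sigma> - P_op n X col (\<nu> \<inter> \<nu>') \<phi> \<sigma>)
      = P_defect n X col ({0..n} - {\<alpha>}) ({0..n} - {\<beta>})"
    "(\<lambda>\<phi> \<sigma>. P_op n X col \<nu>' (P_op n X col \<nu> \<phi>) \<sigma> - P_op n X col (\<nu> \<inter> \<nu>') \<phi> \<sigma>)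
      = P_defect n X col ({0..n} - {\<beta>}) ({0..n} - {\<alpha>})"
    unfolding \<alpha> \<beta> by (auto simp: P_defect_def fun_eq_iff Int_commute)
  show ?thesis
    unfolding defects reps_I using p1.op_norm_P_defect_le p2.op_norm_P_defect_le reps_I(2) by simp
qed

end
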